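(* Under the assumption $\det[K^\pm(\omega)-\omega]\neq0$ for all $\omega>0$, for every integer $r\ge0$ the matrix function $\tilde R^\pm(\omega)$ is $r$ times differentiable on $(0,\infty)$ and $\frac{d^r\tilde R^\pm(\omega)}{d\omega^r}=O(\omega^{-r-1})$ as $\omega\to\infty$.
   Context: Let $N\ge 1$ and $\mathcal H=\mathbb C^N\oplus L^2((0,\infty))$, where $|1\rangle,\dots,|N\rangle$ is the standard orthonormal basis of $\mathbb C^N$. Let $\omega_1\le\dots\le\omega_N$ be real, $\lambda\in\mathbb R$, $v_1,\dots,v_N\in L^2((0,\infty))$. The Hamiltonian is $H=H_0+\lambda V$ with $H_0(|c\rangle+|f\rangle)=\sum_n\omega_nc_n|n\rangle+\omega f(\omega)$ on $D(H_0)=\{|c\rangle+|f\rangle:\int_0^\infty|\omega f(\omega)|^2d\omega<\infty\}$ and $V(|c\rangle+|f\rangle)=\sum_n\langle v_n|f\rangle|n\rangle+\sum_n c_n v_n$. Form-factor assumption: for all $m,n$, $v_m^*(\omega)v_n(\omega)=\pi_{mn}(\omega)/\rho_{mn}(\omega)$ with polynomials such that $\deg\rho_{mn}\ge\deg\pi_{mn}+2$, $\rho_{mn}$ has no zeros in $[0,\infty)$, $\pi_{mn}(0)=0$; $\Gamma(\omega)$ is the matrix with entries $v_m^*(\omega)v_n(\omega)$. The reduced resolvent $\tilde R(z)$ is the matrix with entries $\langle m|(H-z)^{-1}|n\rangle$. Let $K_0=\mathrm{diag}(\omega_1,\dots,\omega_N)$; for $\omega>0$, $D_{mn}(\omega)=P\!\int_0^\infty\frac{v_m^*(\omega')v_n(\omega')}{\omega'-\omega}d\omega'$,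 $K^\pm(\omega)=K_0-\lambda^2D(\omega)\mp i\pi\lambda^2\Gamma(\omega)$, and $\tilde R^\pm(\omega)=\lim_{\epsilon\to+0}\tilde R(\omega\pm i\epsilon)$, which under the stated assumption exists and equals $[K^\pm(\omega)-\omega]^{-1}$. *)

theory Defs
  imports "HOL-Analysis.Analysis" "HOL-Computational_Algebra.Polynomial"
begin

definition pv_integral :: "(real \<Rightarrow> complex) \<Rightarrow> real \<Rightarrow> complex" where
  "pv_integral f w = Lim (at_right 0)
     (\<lambda>e. integral ({0<..<w - e} \<union> {w + e<..}) (\<lambda>x. f x / complex_of_real (x - w)))"

definition Gam :: "('n::finite \<Rightarrow> real \<Rightarrow> complex) \<Rightarrow> real \<Rightarrow> complex^'n^'n" where
  "Gam v w = (\<chi> m n. cnj (v m w) * v n w)"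

definition Dmat :: "('n::finite \<Rightarrow> real \<Rightarrow> complex) \<Rightarrow> real \<Rightarrow> complex^'n^'n" where
  "Dmat v w = (\<chi> m n. pv_integral (\<lambda>x. cnj (v m x) * v n x) w)"

(* K^\<pm>(w) = K_0 - \<lambda>^2 D(w) \<mp> i \<pi> \<lambda>^2 \<Gamma>(w);  s = 1 gives K^+, s = -1 gives K^- *)
definition Kpm :: "real \<Rightarrow> ('n::finite \<Rightarrow> real) \<Rightarrow> real \<Rightarrow> ('n \<Rightarrow> real \<Rightarrow> complex)
                   \<Rightarrow> real \<Rightarrow> complex^'n^'n" where
  "Kpm s om lam v w = (\<chi> m n.
      (if m = n then complex_of_real (om m) else 0)
      - complex_of_real (lam^2) * (Dmat v w $ m $ n)
      - complex_of_real s * \<i> * complex_of_real (pi * lam^2) * (Gam v w $ m $ n))"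

definition Rpm :: "real \<Rightarrow> ('n::finite \<Rightarrow> real) \<Rightarrow> real \<Rightarrow> ('n \<Rightarrow> real \<Rightarrow> complex)
                   \<Rightarrow> real \<Rightarrow> complex^'n^'n" where
  "Rpm s om lam v w = matrix_inv (Kpm s om lam v w - mat (complex_of_real w))"

fun nth_vderiv :: "nat \<Rightarrow> (real \<Rightarrow> 'a::real_normed_vector) \<Rightarrow> real \<Rightarrow> 'a" where
  "nth_vderiv 0 f = f"
| "nth_vderiv (Suc k) f = (\<lambda>x. vector_derivative (nth_vderiv k f) (at x))"

end

theory Submission
  imports Defs
begin

text \<open>
  Call \<open>F\<close> a symbol of order \<open>m\<close> if its \<open>k\<close>-th derivative is \<open>O(x powr (m - k))\<close> as
  \<open>x \<rightarrow> \<infinity>\<close>. Symbols are closed under sums and bounded bilinear products (Leibniz rule), and a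
  rational function whose denominator has no zeros on \<open>(0, \<infinity>)\<close> is a symbol whose order is its
  degree difference.

  After the substitution \<open>x = w t\<close>, the principal value integral \<open>D(w)\<close> of a rational function
  \<open>g = O(x\<^sup>-\<^sup>2)\<close> becomes an ordinary integral of \<open>(g(w(1+u)) - g(w(1-u))) / u\<close> over \<open>u \<in> [0, 1]\<close>
  plus the integral of \<open>g(w t) / (t - 1)\<close> over \<open>t \<ge> 2\<close>. This is bounded in \<open>w\<close>, and differentiating
  under the integral sign gives the same transform of the rational function \<open>x g'(x)\<close>, divided by
  \<open>w\<close>; so \<open>D\<close> is a symbol of order \<open>0\<close>.

  Hence \<open>A(w) = K\<^sup>\<plusminus>(w) - w\<close> is a symbol of order \<open>1\<close>. Its inverse \<open>R\<close> is \<open>O(1/w)\<close> because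
  \<open>K\<^sup>\<plusminus>\<close> is bounded, and \<open>R' = - R A' R\<close> turns this into an induction on the number of
  derivatives showing that \<open>R\<close> is a symbol of order \<open>-1\<close>.
\<close>

section \<open>Power-law bounds and symbol classes\<close>

definition powr_bounded :: "real \<Rightarrow> (real \<Rightarrow> 'a::real_normed_vector) \<Rightarrow> bool" where
  "powr_bounded m F \<longleftrightarrow> (\<exists>C W. \<forall>x\<ge>W. norm (F x) \<le> C * x powr m)"

fun symbol :: "nat \<Rightarrow> real \<Rightarrow> (real \<Rightarrow> 'a::real_normed_vector) \<Rightarrow> bool" where
  "symbol 0 m F \<longleftrightarrow> powr_bounded m F"
| "symbol (Suc j) m F \<longleftrightarrow> powr_bounded m F \<and> (\<forall>x>0. F differentiable (at x))
      \<and> symbol j (m - 1) (\<lambda>x. vector_derivative F (at x))"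

lemma powr_boundedI:
  assumes "\<And>x. x \<ge> W \<Longrightarrow> norm (F x) \<le> C * x powr m"
  shows "powr_bounded m F"
  using assms unfolding powr_bounded_def by blast

lemma powr_boundedE:
  assumes "powr_bounded m F"
  obtains C W where "C \<ge> 0" "W \<ge> 1" "\<And>x. x \<ge> W \<Longrightarrow> norm (F x) \<le> C * x powr m"
proof -
  obtain C W where CW: "\<And>x. x \<ge> W \<Longrightarrow> norm (F x) \<le> C * x powr m"
    using assms unfolding powr_bounded_def by blast
  show ?thesis
  proof (rule that[of "max C 0" "max W 1"])
    fix x assume x: "x \<ge> max W 1"
    have "norm (F x) \<le> C * x powr m" using CW x by auto
    also have "\<dots> \<le> max C 0 * x powr m" by (intro mult_right_mono) auto
    finally show "norm (F x) \<le> max C 0 * x powr m" .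
  qed auto
qed

lemma powr_bounded_mono:
  assumes "powr_bounded m F" "m \<le> m'"
  shows "powr_bounded m' F"
proof -
  obtain C W where CW: "C \<ge> 0" "W \<ge> 1" "\<And>x. x \<ge> W \<Longrightarrow> norm (F x) \<le> C * x powr m"
    using powr_boundedE[OF assms(1)] by metis
  show ?thesis
  proof (rule powr_boundedI)
    fix x assume x: "x \<ge> W"
    have "norm (F x) \<le> C * x powr m" using CW x by auto
    also have "\<dots> \<le> C * x powr m'" using CW x assms(2) by (intro mult_left_mono powr_mono) auto
    finally show "norm (F x) \<le> C * x powr m'" .
  qed
qed

lemma powr_bounded_cong:
  assumes "powr_bounded m F" "\<And>x. x > 0 \<Longrightarrow> F x = G x"
  shows "powr_bounded m G"
proof -
  obtain C W where "W \<ge> 1" "\<And>x. x \<ge> W \<Longrightarrow> norm (F x) \<le> C * x powr m"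
    using powr_boundedE[OF assms(1)] by metis
  then show ?thesis using assms(2) by (intro powr_boundedI[of W]) auto
qed

lemma powr_bounded_add:
  assumes "powr_bounded m F" "powr_bounded m G"
  shows "powr_bounded m (\<lambda>x. F x + G x)"
proof -
  obtain C W where C: "W \<ge> 1" "\<And>x. x \<ge> W \<Longrightarrow> norm (F x) \<le> C * x powr m"
    using powr_boundedE[OF assms(1)] by metis
  obtain C' W' where C': "W' \<ge> 1" "\<And>x. x \<ge> W' \<Longrightarrow> norm (G x) \<le> C' * x powr m"
    using powr_boundedE[OF assms(2)] by metis
  show ?thesis
  proof (rule powr_boundedI[of "max W W'"])
    fix x assume x: "x \<ge> max W W'"
    have "norm (F x + G x) \<le> norm (F x) + norm (G x)" by (rule norm_triangle_ineq)
    also have "\<dots> \<le> C * x powr m + C' * x powr m" using C C' x by (intro add_mono) auto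
    finally show "norm (F x + G x) \<le> (C + C') * x powr m" by (simp add: algebra_simps)
  qed
qed

lemma powr_bounded_linear:
  assumes "powr_bounded m F" "bounded_linear L"
  shows "powr_bounded m (\<lambda>x. L (F x))"
proof -
  obtain C W where C: "C \<ge> 0" "W \<ge> 1" "\<And>x. x \<ge> W \<Longrightarrow> norm (F x) \<le> C * x powr m"
    using powr_boundedE[OF assms(1)] by metis
  obtain K where K: "\<And>y. norm (L y) \<le> norm y * K" "K > 0"
    using bounded_linear.pos_bounded[OF assms(2)] by blast
  show ?thesis
  proof (rule powr_boundedI[of W])
    fix x assume x: "x \<ge> W"
    have "norm (L (F x)) \<le> norm (F x) * K" by (rule K)
    also have "\<dots> \<le> (C * x powr m) * K" using C x K by (intro mult_right_mono) auto
    finally show "norm (L (F x)) \<le> (C * K) * x powr m" by (simp add: algebra_simps)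
  qed
qed

lemma powr_bounded_bilinear:
  assumes "powr_bounded m F" "powr_bounded n G" "bounded_bilinear B"
  shows "powr_bounded (m + n) (\<lambda>x. B (F x) (G x))"
proof -
  obtain C W where C: "C \<ge> 0" "W \<ge> 1" "\<And>x. x \<ge> W \<Longrightarrow> norm (F x) \<le> C * x powr m"
    using powr_boundedE[OF assms(1)] by metis
  obtain C' W' where C': "C' \<ge> 0" "W' \<ge> 1" "\<And>x. x \<ge> W' \<Longrightarrow> norm (G x) \<le> C' * x powr n"
    using powr_boundedE[OF assms(2)] by metis
  obtain K where K: "\<And>a b. norm (B a b) \<le> norm a * norm b * K" "K > 0"
    using bounded_bilinear.pos_bounded[OF assms(3)] by blast
  show ?thesis
  proof (rule powr_boundedI[of "max W W'"])
    fix x assume x: "x \<ge> max W W'"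
    have "norm (B (F x) (G x)) \<le> norm (F x) * norm (G x) * K" by (rule K)
    also have "\<dots> \<le> (C * x powr m) * (C' * x powr n) * K"
      using C C' x K by (intro mult_right_mono mult_mono) auto
    also have "\<dots> = (C * C' * K) * x powr (m + n)"
      using x C by (simp add: powr_add algebra_simps)
    finally show "norm (B (F x) (G x)) \<le> (C * C' * K) * x powr (m + n)" .
  qed
qed

lemma powr_bounded_const: "powr_bounded 0 (\<lambda>x. c)"
  by (rule powr_boundedI[of 1 _ "norm c"]) auto

lemma powr_bounded_zero: "powr_bounded m (\<lambda>x. 0)"
  by (rule powr_boundedI[of 1 _ 0]) auto

lemma vector_derivative_cong_pos:
  assumes "\<And>x. x > 0 \<Longrightarrow> F x = G x" "x > 0"
  shows "vector_derivative F (at x) = vector_derivative G (at x)"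
proof -
  have "eventually (\<lambda>y. y \<in> {0<..}) (nhds x)"
    by (rule eventually_nhds_in_open) (use assms in auto)
  then have "eventually (\<lambda>y. y \<in> UNIV \<longrightarrow> F y = G y) (nhds x)"
    by eventually_elim (use assms in auto)
  then show ?thesis by (rule vector_derivative_cong_eq) auto
qed

lemma differentiable_cong_pos:
  fixes F G :: "real \<Rightarrow> 'a::real_normed_vector"
  assumes "\<And>x. x > 0 \<Longrightarrow> F x = G x" "x > 0" "F differentiable (at x)"
  shows "G differentiable (at x)"
proof -
  obtain D where "(F has_derivative D) (at x)" using assms(3) unfolding differentiable_def by blast
  then have "(G has_derivative D) (at x)"
    by (rule has_derivative_transform_within_open[where s="{0<..}"]) (use assms in auto)
  then show ?thesis unfolding differentiable_def by blast
qed

lemma symbol_cong: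
  assumes "symbol j m F" "\<And>x. x > 0 \<Longrightarrow> F x = G x"
  shows "symbol j m G"
  using assms
proof (induction j arbitrary: m F G)
  case 0 then show ?case using powr_bounded_cong by auto
next
  case (Suc j)
  have "symbol j (m - 1) (\<lambda>x. vector_derivative G (at x))"
    using Suc.IH[of "m - 1" "\<lambda>x. vector_derivative F (at x)"] Suc.prems
      vector_derivative_cong_pos[of F G] by auto
  then show ?case using Suc.prems powr_bounded_cong[of m F G] differentiable_cong_pos[of F G] by auto
qed

lemma symbol_SucI:
  assumes "powr_bounded m F" "\<And>x. x > 0 \<Longrightarrow> (F has_vector_derivative F' x) (at x)"
    and "symbol j (m - 1) F'"
  shows "symbol (Suc j) m F"
proof -
  have "symbol j (m - 1) (\<lambda>x. vector_derivative F (at x))"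
    using assms(3) by (rule symbol_cong) (use assms(2) vector_derivative_at in metis)
  then show ?thesis using assms(1,2) differentiableI_vector by auto
qed

lemma symbol_SucD:
  assumes "symbol (Suc j) m F" "x > 0"
  shows "(F has_vector_derivative vector_derivative F (at x)) (at x)"
  using assms by (simp add: vector_derivative_works[symmetric])

lemma symbol_Suc_imp_symbol: "symbol (Suc j) m F \<Longrightarrow> symbol j m F"
  by (induction j arbitrary: m F) auto

lemma symbol_mono: "symbol j m F \<Longrightarrow> m \<le> m' \<Longrightarrow> symbol j m' F"
  by (induction j arbitrary: m m' F) (auto intro: powr_bounded_mono)

lemma symbol_add: "symbol j m F \<Longrightarrow> symbol j m G \<Longrightarrow> symbol j m (\<lambda>x. F x + G x)"
proof (induction j arbitrary: m F G)
  case 0 then show ?case using powr_bounded_add by auto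
next
  case (Suc j)
  show ?case
  proof (rule symbol_SucI)
    show "powr_bounded m (\<lambda>x. F x + G x)" using Suc.prems powr_bounded_add by auto
    show "((\<lambda>x. F x + G x) has_vector_derivative
        vector_derivative F (at x) + vector_derivative G (at x)) (at x)" if "x > 0" for x
      using symbol_SucD[OF Suc.prems(1) that] symbol_SucD[OF Suc.prems(2) that]
      by (rule has_vector_derivative_add)
    show "symbol j (m - 1) (\<lambda>x. vector_derivative F (at x) + vector_derivative G (at x))"
      using Suc by auto
  qed
qed

lemma symbol_linear: "symbol j m F \<Longrightarrow> bounded_linear L \<Longrightarrow> symbol j m (\<lambda>x. L (F x))"
proof (induction j arbitrary: m F)
  case 0 then show ?case using powr_bounded_linear by auto
next
  case (Suc j)
  show ?case
  proof (rule symbol_SucI)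
    show "powr_bounded m (\<lambda>x. L (F x))" using Suc.prems powr_bounded_linear by auto
    show "((\<lambda>x. L (F x)) has_vector_derivative L (vector_derivative F (at x))) (at x)"
      if "x > 0" for x
      using bounded_linear.has_vector_derivative[OF Suc.prems(2) symbol_SucD[OF Suc.prems(1) that]] .
    show "symbol j (m - 1) (\<lambda>x. L (vector_derivative F (at x)))"
      using Suc by auto
  qed
qed

lemma symbol_bilinear:
  "symbol j m F \<Longrightarrow> symbol j n G \<Longrightarrow> bounded_bilinear B \<Longrightarrow> symbol j (m + n) (\<lambda>x. B (F x) (G x))"
proof (induction j arbitrary: m n F G)
  case 0 then show ?case using powr_bounded_bilinear by auto
next
  case (Suc j)
  let ?F' = "\<lambda>x. vector_derivative F (at x)"
  let ?G' = "\<lambda>x. vector_derivative G (at x)"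
  show ?case
  proof (rule symbol_SucI)
    show "powr_bounded (m + n) (\<lambda>x. B (F x) (G x))"
      using Suc.prems powr_bounded_bilinear by auto
    show "((\<lambda>x. B (F x) (G x)) has_vector_derivative B (F x) (?G' x) + B (?F' x) (G x)) (at x)"
      if "x > 0" for x
      using bounded_bilinear.has_vector_derivative[OF Suc.prems(3)
          symbol_SucD[OF Suc.prems(1) that] symbol_SucD[OF Suc.prems(2) that]] .
    have "symbol j (m + (n - 1)) (\<lambda>x. B (F x) (?G' x))"
      using Suc.IH[of m F "n - 1" ?G'] Suc.prems symbol_Suc_imp_symbol[of j m F] by auto
    moreover have "symbol j ((m - 1) + n) (\<lambda>x. B (?F' x) (G x))"
      using Suc.IH[of "m - 1" ?F' n G] Suc.prems symbol_Suc_imp_symbol[of j n G] by auto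
    ultimately show "symbol j (m + n - 1) (\<lambda>x. B (F x) (?G' x) + B (?F' x) (G x))"
      by (intro symbol_add) (simp_all add: algebra_simps)
  qed
qed

lemma symbol_zero: "symbol j m (\<lambda>x. 0)"
proof (induction j arbitrary: m)
  case 0 then show ?case by (simp add: powr_bounded_zero)
next
  case (Suc j) then show ?case
    by (intro symbol_SucI[where F'="\<lambda>x. 0"] powr_bounded_zero) auto
qed

lemma symbol_const: "symbol j 0 (\<lambda>x. c)"
proof (cases j)
  case 0 then show ?thesis by (simp add: powr_bounded_const)
next
  case (Suc k) then show ?thesis
    by (auto intro!: symbol_SucI[where F'="\<lambda>x. 0"] powr_bounded_const symbol_zero)
qed

lemma symbol_sum:
  "finite I \<Longrightarrow> (\<And>i. i \<in> I \<Longrightarrow> symbol j m (F i)) \<Longrightarrow> symbol j m (\<lambda>x. \<Sum>i\<in>I. F i x)"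
  by (induction I rule: finite_induct) (auto intro: symbol_zero symbol_add)

lemma symbol_ident: "symbol j 1 (\<lambda>x::real. x)"
proof (cases j)
  case 0 then show ?thesis by (auto intro!: powr_boundedI[of 1 _ 1])
next
  case (Suc k) then show ?thesis
    by (auto intro!: symbol_SucI[where F'="\<lambda>x. 1"] powr_boundedI[of 1 _ 1] symbol_const
        derivative_eq_intros)
qed

lemma nth_vderiv_vector_derivative:
  "nth_vderiv k (\<lambda>x. vector_derivative F (at x)) = nth_vderiv (Suc k) F"
  by (induction k) auto

lemma symbol_nth_vderiv_powr_bounded:
  "symbol j m F \<Longrightarrow> powr_bounded (m - real j) (nth_vderiv j F)"
proof (induction j arbitrary: m F)
  case (Suc j)
  then have "powr_bounded (m - 1 - real j) (nth_vderiv j (\<lambda>x. vector_derivative F (at x)))"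
    by simp
  then show ?case by (simp only: nth_vderiv_vector_derivative) (simp add: algebra_simps)
qed simp

lemma symbol_nth_vderiv_has_vector_derivative:
  assumes "symbol j m F" "k < j" "x > 0"
  shows "(nth_vderiv k F has_vector_derivative nth_vderiv (Suc k) F x) (at x)"
  using assms
proof (induction k arbitrary: j m F)
  case 0
  then obtain j' where "j = Suc j'" by (cases j) auto
  then show ?case using symbol_SucD 0 by simp
next
  case (Suc k)
  then obtain j' where j: "j = Suc j'" by (cases j) auto
  then have "(nth_vderiv k (\<lambda>x. vector_derivative F (at x)) has_vector_derivative
      nth_vderiv (Suc k) (\<lambda>x. vector_derivative F (at x)) x) (at x)"
    using Suc by (intro Suc.IH[of j' "m - 1"]) auto
  then show ?case by (simp only: nth_vderiv_vector_derivative)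
qed

section \<open>Rational functions\<close>

definition ratfun :: "complex poly \<Rightarrow> complex poly \<Rightarrow> real \<Rightarrow> complex" where
  "ratfun p q x = poly p (of_real x) / poly q (of_real x)"

definition quotient_deriv_num :: "complex poly \<Rightarrow> complex poly \<Rightarrow> complex poly" where
  "quotient_deriv_num p q = pderiv p * q - p * pderiv q"

lemma poly_div_power_degree_tendsto:
  fixes p :: "complex poly"
  shows "((\<lambda>x. poly p (of_real x) / of_real x ^ degree p) \<longlongrightarrow> lead_coeff p) at_top"
proof -
  let ?d = "degree p"
  have ev: "eventually (\<lambda>x. (\<Sum>i\<le>?d. coeff p i * of_real (inverse x ^ (?d - i)))
            = poly p (of_real x) / of_real x ^ ?d) at_top"
    using eventually_gt_at_top[of "0::real"]
  proof eventually_elim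
    case (elim x)
    have "poly p (of_real x) / of_real x ^ ?d = (\<Sum>i\<le>?d. coeff p i * of_real x ^ i / of_real x ^ ?d)"
      by (simp add: poly_altdef sum_divide_distrib)
    also have "\<dots> = (\<Sum>i\<le>?d. coeff p i * of_real (inverse x ^ (?d - i)))"
    proof (rule sum.cong)
      fix i assume "i \<in> {..?d}"
      then have "(of_real x :: complex) ^ ?d = of_real x ^ i * of_real x ^ (?d - i)"
        by (simp add: power_add[symmetric])
      then show "coeff p i * of_real x ^ i / of_real x ^ ?d = coeff p i * of_real (inverse x ^ (?d - i))"
        using elim by (simp add: field_simps power_inverse)
    qed simp
    finally show ?case by simp
  qed
  have "((\<lambda>x. (\<Sum>i\<le>?d. coeff p i * of_real (inverse x ^ (?d - i)))) \<longlongrightarrow>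
        (\<Sum>i\<le>?d. coeff p i * of_real (0 ^ (?d - i)))) at_top"
    by (intro tendsto_intros tendsto_inverse_0_at_top filterlim_ident)
  also have "(\<Sum>i\<le>?d. coeff p i * of_real (0 ^ (?d - i))) = (\<Sum>i\<in>{?d}. coeff p i)"
    by (rule sum.mono_neutral_cong_right) auto
  finally show ?thesis using ev by (simp add: tendsto_cong)
qed

lemma norm_poly_div_power_degree_tendsto:
  fixes p :: "complex poly"
  shows "((\<lambda>x. norm (poly p (of_real x)) / x ^ degree p) \<longlongrightarrow> norm (lead_coeff p)) at_top"
proof -
  have "eventually (\<lambda>x. norm (poly p (of_real x) / of_real x ^ degree p)
      = norm (poly p (of_real x)) / x ^ degree p) at_top"
    using eventually_gt_at_top[of "0::real"] by eventually_elim (simp add: norm_divide norm_power)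
  then show ?thesis
    by (rule Lim_transform_eventually[OF tendsto_norm[OF poly_div_power_degree_tendsto]])
qed

lemma ratfun_powr_bounded:
  assumes q_nz: "\<And>x. x > 0 \<Longrightarrow> poly q (of_real x) \<noteq> 0"
    and deg: "p = 0 \<or> real (degree p) \<le> real (degree q) + m"
  shows "powr_bounded m (ratfun p q)"
proof (cases "p = 0")
  case True
  then show ?thesis using powr_bounded_zero by (simp add: ratfun_def[abs_def])
next
  case False
  let ?a = "\<lambda>x. norm (poly p (of_real x)) / x ^ degree p"
  let ?b = "\<lambda>x. norm (poly q (of_real x)) / x ^ degree q"
  define cp where "cp = norm (lead_coeff p) + 1"
  define cq where "cq = norm (lead_coeff q) / 2"
  have cq: "cq > 0" "cq < norm (lead_coeff q)" using q_nz[of 1] by (auto simp: cq_def)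
  have "eventually (\<lambda>x. ?a x < cp) at_top"
    using order_tendstoD(2)[OF norm_poly_div_power_degree_tendsto] by (simp add: cp_def)
  moreover have "eventually (\<lambda>x. cq < ?b x) at_top"
    using order_tendstoD(1)[OF norm_poly_div_power_degree_tendsto cq(2)] .
  ultimately have "eventually (\<lambda>x. ?a x < cp \<and> cq < ?b x \<and> x \<ge> 1) at_top"
    by (intro eventually_conj eventually_ge_at_top)
  then obtain W where W: "\<And>x. x \<ge> W \<Longrightarrow> ?a x < cp \<and> cq < ?b x \<and> x \<ge> 1"
    unfolding eventually_at_top_linorder by blast
  show ?thesis
  proof (rule powr_boundedI)
    fix x assume x: "x \<ge> W"
    have x1: "x \<ge> 1" and ab: "?a x \<le> cp" "cq \<le> ?b x" using W[OF x] by auto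
    have "x powr (real (degree p) - real (degree q)) = x ^ degree p / x ^ degree q"
      using x1 by (simp add: powr_diff powr_realpow)
    moreover have "poly q (of_real x) \<noteq> 0" using q_nz x1 by simp
    ultimately have "norm (ratfun p q x) = ?a x / ?b x * x powr (real (degree p) - real (degree q))"
      using x1 by (simp add: ratfun_def norm_divide)
    also have "\<dots> \<le> cp / cq * x powr m"
    proof (rule mult_mono)
      show "?a x / ?b x \<le> cp / cq" using ab cq by (intro frac_le) (auto simp: cp_def)
      show "x powr (real (degree p) - real (degree q)) \<le> x powr m"
        using x1 deg False by (intro powr_mono) auto
    qed (use cq ab in \<open>auto simp: cp_def\<close>)
    finally show "norm (ratfun p q x) \<le> cp / cq * x powr m" .
  qed
qed

lemma ratfun_has_vector_derivative:
  assumes "poly q (of_real x) \<noteq> 0"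
  shows "(ratfun p q has_vector_derivative ratfun (quotient_deriv_num p q) (q * q) x) (at x within S)"
proof -
  have "((\<lambda>z. poly p z / poly q z) has_field_derivative
        (poly (pderiv p) (of_real x) * poly q (of_real x) - poly p (of_real x) * poly (pderiv q) (of_real x))
         / (poly q (of_real x) * poly q (of_real x))) (at (of_real x))"
    using assms by (auto intro!: derivative_eq_intros simp: power2_eq_square)
  then have "((\<lambda>x. poly p (of_real x) / poly q (of_real x)) has_vector_derivative
        (poly (pderiv p) (of_real x) * poly q (of_real x) - poly p (of_real x) * poly (pderiv q) (of_real x))
         / (poly q (of_real x) * poly q (of_real x))) (at x within S)"
    by (rule has_vector_derivative_real_field)
  then show ?thesis by (simp add: ratfun_def[abs_def] quotient_deriv_num_def)
qed

lemma continuous_on_ratfun: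
  assumes "\<And>x. x \<in> S \<Longrightarrow> poly q (of_real x) \<noteq> 0"
  shows "continuous_on S (ratfun p q)"
proof (rule continuous_at_imp_continuous_on, rule ballI)
  fix x assume "x \<in> S"
  from ratfun_has_vector_derivative[OF assms[OF this], of p UNIV] show "isCont (ratfun p q) x"
    by (rule has_vector_derivative_continuous)
qed

lemma degree_quotient_deriv_num:
  fixes p q :: "complex poly"
  assumes "quotient_deriv_num p q \<noteq> 0"
  shows "degree (quotient_deriv_num p q) + 1 \<le> degree p + degree q"
proof -
  have deg_pos: "degree p + degree q \<ge> 1"
  proof (rule ccontr)
    assume "\<not> ?thesis"
    then have "pderiv p = 0" "pderiv q = 0" by (auto simp: pderiv_eq_0_iff)
    then show False using assms by (simp add: quotient_deriv_num_def)
  qed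
  have "degree (pderiv p * q) \<le> degree p + degree q - 1"
  proof (cases "degree p = 0")
    case True then have "pderiv p = 0" by (simp add: pderiv_eq_0_iff)
    then show ?thesis by simp
  qed (use degree_mult_le[of "pderiv p" q] in \<open>simp add: degree_pderiv\<close>)
  moreover have "degree (p * pderiv q) \<le> degree p + degree q - 1"
  proof (cases "degree q = 0")
    case True then have "pderiv q = 0" by (simp add: pderiv_eq_0_iff)
    then show ?thesis by simp
  qed (use degree_mult_le[of p "pderiv q"] in \<open>simp add: degree_pderiv\<close>)
  moreover have "degree (quotient_deriv_num p q)
      \<le> max (degree (pderiv p * q)) (degree (p * pderiv q))"
    unfolding quotient_deriv_num_def by (rule degree_diff_le_max)
  ultimately show ?thesis using deg_pos by linarith
qed

lemma symbol_ratfun: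
  assumes "\<And>x. x > 0 \<Longrightarrow> poly q (of_real x) \<noteq> 0"
    and "p = 0 \<or> real (degree p) \<le> real (degree q) + m"
  shows "symbol j m (ratfun p q)"
  using assms
proof (induction j arbitrary: p q m)
  case 0 then show ?case using ratfun_powr_bounded by auto
next
  case (Suc j)
  have q0: "q \<noteq> 0" using Suc.prems(1)[of 1] by auto
  have "quotient_deriv_num p q = 0
      \<or> real (degree (quotient_deriv_num p q)) \<le> real (degree (q * q)) + (m - 1)"
  proof (cases "quotient_deriv_num p q = 0")
    case False
    then have "p \<noteq> 0" by (auto simp: quotient_deriv_num_def)
    then show ?thesis
      using Suc.prems(2) degree_quotient_deriv_num[OF False] q0 by (auto simp: degree_mult_eq)
  qed simp
  then have "symbol j (m - 1) (ratfun (quotient_deriv_num p q) (q * q))"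
    using Suc.prems(1) by (intro Suc.IH) auto
  then show ?case
    using Suc.prems
    by (intro symbol_SucI[where F'="ratfun (quotient_deriv_num p q) (q * q)"]
        ratfun_powr_bounded ratfun_has_vector_derivative) auto
qed

section \<open>The principal value integral of a decaying rational function\<close>

lemma ratfun_global_bound:
  assumes q_nz: "\<And>x. x \<ge> 0 \<Longrightarrow> poly q (of_real x) \<noteq> 0"
    and deg: "p = 0 \<or> degree p + k \<le> degree q"
  obtains C where "C \<ge> 0" "\<And>y. y \<ge> 0 \<Longrightarrow> norm (ratfun p q y) \<le> C"
    "\<And>y. y > 0 \<Longrightarrow> norm (ratfun p q y) \<le> C / y ^ k"
proof -
  have "powr_bounded (- real k) (ratfun p q)"
    by (rule ratfun_powr_bounded) (use q_nz deg in auto)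
  then obtain C W where CW: "C \<ge> 0" "W \<ge> 1"
      "\<And>x. x \<ge> W \<Longrightarrow> norm (ratfun p q x) \<le> C * x powr (- real k)"
    using powr_boundedE by metis
  have "compact (ratfun p q ` {0..W})"
    by (intro compact_continuous_image continuous_on_ratfun) (use q_nz in auto)
  then obtain M where M: "M > 0" "\<And>y. y \<in> {0..W} \<Longrightarrow> norm (ratfun p q y) \<le> M"
    using compact_imp_bounded bounded_pos by (metis image_eqI)
  define D where "D = max (M * W ^ k) C"
  have D: "norm (ratfun p q y) \<le> D \<and> norm (ratfun p q y) * y ^ k \<le> D" if y: "y \<ge> 0" for y
  proof (cases "y \<le> W")
    case True
    then have "norm (ratfun p q y) * y ^ k \<le> M * W ^ k"
      using M y by (intro mult_mono power_mono) auto
    moreover have "M \<le> M * W ^ k" using M CW(2) by (simp add: one_le_power)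
    ultimately show ?thesis using M(2)[of y] True y by (auto simp: D_def)
  next
    case False
    then have y1: "y \<ge> 1" "y \<ge> W" using CW(2) by auto
    then have le: "norm (ratfun p q y) \<le> C / y ^ k"
      using CW(3)[of y] by (simp add: powr_minus powr_realpow divide_inverse)
    moreover have "C / y ^ k \<le> C" using CW(1) y1 by (simp add: divide_le_eq one_le_power mult_le_cancel_left1)
    moreover have "norm (ratfun p q y) * y ^ k \<le> C" using le y1 by (simp add: pos_le_divide_eq)
    ultimately show ?thesis by (auto simp: D_def)
  qed
  show ?thesis
  proof (rule that[of D])
    show "D \<ge> 0" using CW(1) by (simp add: D_def)
    show "norm (ratfun p q y) \<le> D" if "y \<ge> 0" for y using D[OF that] by simp
    show "norm (ratfun p q y) \<le> D / y ^ k" if "y > 0" for y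
      using D[of y] that by (simp add: field_simps)
  qed
qed

definition decaying_ratfun :: "complex poly \<Rightarrow> complex poly \<Rightarrow> bool" where
  "decaying_ratfun p q \<longleftrightarrow> (\<forall>x\<ge>0. poly q (of_real x) \<noteq> 0) \<and> degree p + 2 \<le> degree q"

text \<open>\<open>ratfun (euler_num p q) (q * q)\<close> is \<open>x g'(x)\<close> for \<open>g = ratfun p q\<close>.\<close>

definition euler_num :: "complex poly \<Rightarrow> complex poly \<Rightarrow> complex poly" where
  "euler_num p q = pCons 0 (quotient_deriv_num p q)"

lemma ratfun_euler_num:
  "ratfun (euler_num p q) (q * q) x = of_real x * ratfun (quotient_deriv_num p q) (q * q) x"
  by (simp add: ratfun_def euler_num_def)

lemma decaying_ratfun_nonzero: "decaying_ratfun p q \<Longrightarrow> q \<noteq> 0"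
  unfolding decaying_ratfun_def by (metis order.refl poly_0)

lemma decaying_ratfun_euler_num:
  assumes "decaying_ratfun p q"
  shows "decaying_ratfun (euler_num p q) (q * q)"
proof -
  have dq: "degree (q * q) = degree q + degree q"
    using decaying_ratfun_nonzero[OF assms] by (simp add: degree_mult_eq)
  have "degree (euler_num p q) + 2 \<le> degree (q * q)"
  proof (cases "quotient_deriv_num p q = 0")
    case True then show ?thesis using assms dq by (simp add: euler_num_def decaying_ratfun_def)
  next
    case False
    then have "degree (euler_num p q) = degree (quotient_deriv_num p q) + 1"
      by (simp add: euler_num_def)
    then show ?thesis
      using degree_quotient_deriv_num[OF False] assms dq by (simp add: decaying_ratfun_def)
  qed
  then show ?thesis using assms by (simp add: decaying_ratfun_def)
qed

lemma decaying_ratfun_has_vector_derivative: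
  "decaying_ratfun p q \<Longrightarrow> y \<ge> 0 \<Longrightarrow>
    (ratfun p q has_vector_derivative ratfun (quotient_deriv_num p q) (q * q) y) (at y within S)"
  by (rule ratfun_has_vector_derivative) (simp add: decaying_ratfun_def)

lemma decaying_ratfun_bounds:
  assumes "decaying_ratfun p q"
  obtains B where "B \<ge> 0" "\<And>y. y \<ge> 0 \<Longrightarrow> norm (ratfun p q y) \<le> B"
    "\<And>y. y > 0 \<Longrightarrow> norm (ratfun p q y) \<le> B / y ^ 2"
    "\<And>y. y \<ge> 0 \<Longrightarrow> norm (ratfun (quotient_deriv_num p q) (q * q) y) \<le> B"
    "\<And>y. y > 0 \<Longrightarrow> norm (ratfun (quotient_deriv_num p q) (q * q) y) \<le> B / y ^ 3"
proof -
  obtain B1 where B1: "B1 \<ge> 0" "\<And>y. y \<ge> 0 \<Longrightarrow> norm (ratfun p q y) \<le> B1"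
    "\<And>y. y > 0 \<Longrightarrow> norm (ratfun p q y) \<le> B1 / y ^ 2"
    using ratfun_global_bound[of q p 2] assms by (auto simp: decaying_ratfun_def)
  have "quotient_deriv_num p q = 0 \<or> degree (quotient_deriv_num p q) + 3 \<le> degree (q * q)"
  proof (cases "quotient_deriv_num p q = 0")
    case False
    then show ?thesis
      using degree_quotient_deriv_num[OF False] decaying_ratfun_nonzero[OF assms] assms
      by (auto simp: decaying_ratfun_def degree_mult_eq)
  qed simp
  then obtain B2 where B2: "B2 \<ge> 0"
      "\<And>y. y \<ge> 0 \<Longrightarrow> norm (ratfun (quotient_deriv_num p q) (q * q) y) \<le> B2"
      "\<And>y. y > 0 \<Longrightarrow> norm (ratfun (quotient_deriv_num p q) (q * q) y) \<le> B2 / y ^ 3"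
    using ratfun_global_bound[of "q * q" "quotient_deriv_num p q" 3] assms
    by (auto simp: decaying_ratfun_def)
  show ?thesis
  proof (rule that[of "max B1 B2"])
    fix y :: real assume y: "y > 0"
    have "B1 / y ^ 2 \<le> max B1 B2 / y ^ 2" "B2 / y ^ 3 \<le> max B1 B2 / y ^ 3"
      using y by (auto intro!: divide_right_mono)
    then show "norm (ratfun p q y) \<le> max B1 B2 / y ^ 2"
      "norm (ratfun (quotient_deriv_num p q) (q * q) y) \<le> max B1 B2 / y ^ 3"
      using B1(3)[OF y] B2(3)[OF y] by linarith+
  next
    fix y :: real assume y: "y \<ge> 0"
    show "norm (ratfun p q y) \<le> max B1 B2" using B1(2)[OF y] by linarith
    show "norm (ratfun (quotient_deriv_num p q) (q * q) y) \<le> max B1 B2" using B2(2)[OF y] by linarith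
  qed (use B1 in auto)
qed

lemma norm_diff_le_derivative_bound:
  fixes g :: "real \<Rightarrow> 'a::real_inner"
  assumes "a \<le> b" "\<And>x. x \<in> {a..b} \<Longrightarrow> (g has_vector_derivative g' x) (at x)"
    "\<And>x. x \<in> {a..b} \<Longrightarrow> norm (g' x) \<le> B"
  shows "norm (g b - g a) \<le> B * (b - a)"
proof (cases "a = b")
  case True then show ?thesis by simp
next
  case False
  then have ab: "a < b" using assms(1) by simp
  have cont: "continuous_on {a..b} g"
    by (rule continuous_at_imp_continuous_on) (use assms(2) has_vector_derivative_continuous in blast)
  obtain x where x: "x \<in> {a<..<b}" "norm (g b - g a) \<le> norm ((b - a) *\<^sub>R g' x)"
    using mvt_general[OF ab cont, of "\<lambda>x h. h *\<^sub>R g' x"] assms(2)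
    unfolding has_vector_derivative_def by fastforce
  have "norm ((b - a) *\<^sub>R g' x) \<le> (b - a) * B"
    using assms(3)[of x] x(1) ab by (simp add: mult_left_mono)
  then show ?thesis using x(2) by (simp add: mult.commute)
qed

lemma integral_tail_cubic_decay:
  fixes F :: "real \<Rightarrow> 'a::euclidean_space"
  assumes A: "A > 0" and cont: "continuous_on {A..} F"
    and bound: "\<And>x. x \<ge> A \<Longrightarrow> norm (F x) \<le> K * x powr -3"
  shows "F integrable_on {A..}" "norm (integral {A..} F) \<le> K * A powr -2 / 2"
proof -
  have "((\<lambda>x. x powr -3) has_integral -(A powr (-3+1)) / (-3+1)) {A..}"
    by (rule has_integral_powr_to_inf) (use A in auto)
  from has_integral_mult_right[OF this, of K]
  have K: "((\<lambda>x. K * x powr -3) has_integral K * (A powr -2 / 2)) {A..}" by simp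
  have "F absolutely_integrable_on {A..}"
    by (rule measurable_bounded_by_integrable_imp_absolutely_integrable[where g="\<lambda>x. K * x powr -3"])
       (use K bound in \<open>auto intro!: continuous_imp_measurable_on_sets_lebesgue cont\<close>)
  then show F: "F integrable_on {A..}" using set_lebesgue_integral_eq_integral(1) by blast
  have "norm (integral {A..} F) \<le> integral {A..} (\<lambda>x. K * x powr -3)"
    by (rule integral_norm_bound_integral[OF F]) (use K bound in auto)
  also have "\<dots> = K * (A powr -2 / 2)" by (rule integral_unique[OF K])
  finally show "norm (integral {A..} F) \<le> K * A powr -2 / 2" by simp
qed

lemma continuous_on_decaying_ratfun: "decaying_ratfun p q \<Longrightarrow> continuous_on {0..} (ratfun p q)"
  by (rule continuous_on_ratfun) (auto simp: decaying_ratfun_def)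

text \<open>Substituting \<open>x = w t\<close>, the principal value integral of \<open>g(x) / (x - w)\<close> over \<open>(0, \<infinity>)\<close>
  becomes the integral of the symmetric difference quotient \<open>pv_near g w u\<close>, with \<open>u = |t - 1| \<le> 1\<close>,
  plus the integral of \<open>pv_far g w t\<close> over \<open>t \<ge> 2\<close>.\<close>

definition pv_near :: "(real \<Rightarrow> complex) \<Rightarrow> real \<Rightarrow> real \<Rightarrow> complex" where
  "pv_near g w u = (g (w * (1 + u)) - g (w * (1 - u))) / complex_of_real u"

definition pv_far :: "(real \<Rightarrow> complex) \<Rightarrow> real \<Rightarrow> real \<Rightarrow> complex" where
  "pv_far g w t = g (w * t) / complex_of_real (t - 1)"

definition pv_rescaled :: "(real \<Rightarrow> complex) \<Rightarrow> real \<Rightarrow> complex" where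
  "pv_rescaled g w = integral {0..1} (pv_near g w) + integral {2..} (pv_far g w)"

text \<open>Truncating to compact intervals makes the Leibniz rule available; the truncations converge
  locally uniformly in \<open>w\<close>, and so do their derivatives.\<close>

definition pv_truncated :: "(real \<Rightarrow> complex) \<Rightarrow> nat \<Rightarrow> real \<Rightarrow> complex" where
  "pv_truncated g n w =
     integral {1 / (real n + 2)..1} (pv_near g w) + integral {2..real n + 2} (pv_far g w)"

lemma continuous_on_pv_near:
  assumes g: "continuous_on {0..} g" and w: "w > 0"
  shows "continuous_on {0<..1} (pv_near g w)"
proof -
  have "continuous_on {0<..1} (\<lambda>u. g (w * (1 + u)))" "continuous_on {0<..1} (\<lambda>u. g (w * (1 - u)))"
    by (rule continuous_on_compose2[OF g], use w in \<open>auto intro!: continuous_intros\<close>)+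
  then show ?thesis unfolding pv_near_def[abs_def] by (intro continuous_intros) auto
qed

lemma continuous_on_pv_far:
  assumes g: "continuous_on {0..} g" and w: "w > 0" and A: "A > 1"
  shows "continuous_on {A..} (pv_far g w)"
proof -
  have "continuous_on {A..} (\<lambda>t. g (w * t))"
    by (rule continuous_on_compose2[OF g]) (use w A in \<open>auto intro!: continuous_intros\<close>)
  then show ?thesis unfolding pv_far_def[abs_def] by (intro continuous_intros) (use A in auto)
qed

lemma norm_pv_near_le:
  assumes g': "\<And>y. y \<in> {w * (1 - u)..w * (1 + u)} \<Longrightarrow>
      (g has_vector_derivative g' y) (at y) \<and> norm (g' y) \<le> B"
    and w: "w > 0" and u: "u \<in> {0..1}"
  shows "norm (pv_near g w u) \<le> 2 * w * B"
proof (cases "u = 0")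
  case True
  have "w \<in> {w * (1 - u)..w * (1 + u)}" using w u by (simp add: algebra_simps)
  then have "norm (g' w) \<le> B" using g' by blast
  then have "0 \<le> B" using norm_ge_zero order_trans by blast
  then show ?thesis using True w by (simp add: pv_near_def)
next
  case False
  then have u0: "u > 0" using u by auto
  have "norm (g (w * (1 + u)) - g (w * (1 - u))) \<le> B * (w * (1 + u) - w * (1 - u))"
    by (rule norm_diff_le_derivative_bound) (use g' w u in auto)
  also have "\<dots> = (2 * w * B) * u" by (simp add: algebra_simps)
  finally show ?thesis using u0 by (simp add: pv_near_def norm_divide divide_le_eq)
qed

lemma norm_pv_near_decaying_ratfun_le:
  assumes c: "decaying_ratfun p q" and w: "w > 0" and u: "u \<in> {0..1}"
    and B: "\<And>y. y \<ge> 0 \<Longrightarrow> norm (ratfun (quotient_deriv_num p q) (q * q) y) \<le> B"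
  shows "norm (pv_near (ratfun p q) w u) \<le> 2 * w * B"
proof (rule norm_pv_near_le[OF _ w u])
  fix y assume "y \<in> {w * (1 - u)..w * (1 + u)}"
  then have "y \<ge> 0" using w u by (smt (verit) atLeastAtMost_iff mult_nonneg_nonneg)
  then show "(ratfun p q has_vector_derivative ratfun (quotient_deriv_num p q) (q * q) y) (at y)
      \<and> norm (ratfun (quotient_deriv_num p q) (q * q) y) \<le> B"
    using decaying_ratfun_has_vector_derivative[OF c] B by auto
qed

lemma norm_pv_near_le_uniform:
  assumes c: "decaying_ratfun p q" and w: "w \<ge> 1" and u: "u \<in> {0..1}"
    and B: "B \<ge> 0" "\<And>y. y \<ge> 0 \<Longrightarrow> norm (ratfun p q y) \<le> B"
      "\<And>y. y > 0 \<Longrightarrow> norm (ratfun (quotient_deriv_num p q) (q * q) y) \<le> B / y ^ 3"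
  shows "norm (pv_near (ratfun p q) w u) \<le> 16 * B"
proof (cases "u \<le> 1/2")
  case True
  have "norm (pv_near (ratfun p q) w u) \<le> 2 * w * (8 * B / w ^ 3)"
  proof (rule norm_pv_near_le[OF _ _ u])
    fix y assume y: "y \<in> {w * (1 - u)..w * (1 + u)}"
    have "u * w \<le> (1/2) * w" using True w by (intro mult_right_mono) auto
    then have yw: "y \<ge> w / 2" using y by (auto simp: algebra_simps)
    then have y0: "y > 0" using w by auto
    have "(w / 2) ^ 3 \<le> y ^ 3" using yw w by (intro power_mono) auto
    then have "B / y ^ 3 \<le> B / (w / 2) ^ 3" using B(1) w y0 by (intro divide_left_mono) auto
    also have "\<dots> = 8 * B / w ^ 3" by (simp add: field_simps)
    finally show "(ratfun p q has_vector_derivative ratfun (quotient_deriv_num p q) (q * q) y) (at y)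
      \<and> norm (ratfun (quotient_deriv_num p q) (q * q) y) \<le> 8 * B / w ^ 3"
      using decaying_ratfun_has_vector_derivative[OF c] y0 B(3)[OF y0] by auto
  qed (use w in auto)
  also have "\<dots> = 16 * B / w ^ 2" using w by (simp add: field_simps power3_eq_cube power2_eq_square)
  also have "\<dots> \<le> 16 * B" using w B(1) by (simp add: divide_le_eq one_le_power mult_le_cancel_left1)
  finally show ?thesis .
next
  case False
  have "norm (ratfun p q (w * (1 + u)) - ratfun p q (w * (1 - u))) \<le> B + B"
    using B(2)[of "w * (1 + u)"] B(2)[of "w * (1 - u)"] u w norm_triangle_ineq4
    by (smt (verit) atLeastAtMost_iff mult_nonneg_nonneg)
  also have "\<dots> \<le> 16 * B * u"
    using False B(1) mult_left_mono[of "1/2" u B] by linarith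
  finally show ?thesis using False by (simp add: pv_near_def norm_divide divide_le_eq mult.commute)
qed

lemma norm_pv_far_le:
  assumes B: "\<And>y. y > 0 \<Longrightarrow> norm (g y) \<le> B / y ^ 2" "B \<ge> 0"
    and w: "w > 0" and t: "t \<ge> 2"
  shows "norm (pv_far g w t) \<le> (2 * B / w ^ 2) * t powr -3"
proof -
  have nt: "norm (complex_of_real (t - 1)) = t - 1" using t by (subst norm_of_real) simp
  have "norm (pv_far g w t) = norm (g (w * t)) / (t - 1)"
    unfolding pv_far_def norm_divide nt ..
  also have "\<dots> \<le> (B / (w * t) ^ 2) / (t / 2)"
    using B(1)[of "w * t"] w t B(2) by (intro frac_le) auto
  also have "\<dots> = (2 * B / w ^ 2) * t powr -3"
    using w t by (simp add: powr_minus powr_realpow field_simps power2_eq_square power3_eq_cube)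
  finally show ?thesis .
qed

lemma pv_far_tail:
  assumes g: "continuous_on {0..} g"
    and B: "\<And>y. y > 0 \<Longrightarrow> norm (g y) \<le> B / y ^ 2" "B \<ge> 0"
    and w: "w > 0" and A: "A \<ge> 2"
  shows "pv_far g w integrable_on {A..}"
    "norm (integral {A..} (pv_far g w)) \<le> (2 * B / w ^ 2) * A powr -2 / 2"
  using integral_tail_cubic_decay[of A "pv_far g w" "2 * B / w ^ 2"]
    continuous_on_pv_far[OF g w, of A] norm_pv_far_le[OF B w] A
  by auto

lemma integral_pv_far_split:
  assumes g: "continuous_on {0..} g"
    and B: "\<And>y. y > 0 \<Longrightarrow> norm (g y) \<le> B / y ^ 2" "B \<ge> 0"
    and w: "w > 0" and M: "M \<ge> 2"
  shows "integral {2..} (pv_far g w) = integral {2..M} (pv_far g w) + integral {M..} (pv_far g w)"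
proof -
  have i1: "pv_far g w integrable_on {2..M}"
    by (rule integrable_continuous_interval, rule continuous_on_subset[OF continuous_on_pv_far[OF g w, of "3/2"]]) auto
  have i2: "pv_far g w integrable_on {M..}" using pv_far_tail[OF g B w M] by auto
  have "(pv_far g w has_integral (integral {2..M} (pv_far g w) + integral {M..} (pv_far g w)))
      ({2..M} \<union> {M..})"
    by (rule has_integral_Un[OF integrable_integral[OF i1] integrable_integral[OF i2]])
       (rule negligible_subset[of "{M}"], auto)
  moreover have "{2..M} \<union> {M..} = {2..}" using M by auto
  ultimately show ?thesis by (metis integral_unique)
qed

lemma pv_near_integrable:
  assumes c: "decaying_ratfun p q" and w: "w > 0"
  shows "pv_near (ratfun p q) w integrable_on {0..1}"
proof -
  obtain B where B: "\<And>y. y \<ge> 0 \<Longrightarrow> norm (ratfun (quotient_deriv_num p q) (q * q) y) \<le> B"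
    using decaying_ratfun_bounds[OF c] by metis
  have leb: "{0<..1::real} \<in> sets lebesgue" by simp
  have "pv_near (ratfun p q) w absolutely_integrable_on {0<..1}"
  proof (rule measurable_bounded_by_integrable_imp_absolutely_integrable[where g="\<lambda>_. 2 * w * B"])
    show "pv_near (ratfun p q) w \<in> borel_measurable (lebesgue_on {0<..1})"
      by (rule continuous_imp_measurable_on_sets_lebesgue[OF continuous_on_pv_near leb])
         (use continuous_on_decaying_ratfun[OF c] w in auto)
    show "(\<lambda>_. 2 * w * B) integrable_on {0<..1::real}"
      by (rule integrable_on_const, rule bounded_set_imp_lmeasurable) (auto simp: leb)
    show "norm (pv_near (ratfun p q) w x) \<le> 2 * w * B" if "x \<in> {0<..1}" for x
      by (rule norm_pv_near_decaying_ratfun_le[OF c w _ B]) (use that in auto)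
  qed (fact leb)
  then have "pv_near (ratfun p q) w integrable_on {0<..1}"
    using set_lebesgue_integral_eq_integral(1) by blast
  then show ?thesis
    by (rule integrable_spike_set) (auto intro: negligible_subset[of "{0}"])
qed

lemma integral_pv_near_split:
  assumes c: "decaying_ratfun p q" and w: "w > 0" and d: "d \<in> {0..1}"
  shows "integral {0..1} (pv_near (ratfun p q) w)
    = integral {0..d} (pv_near (ratfun p q) w) + integral {d..1} (pv_near (ratfun p q) w)"
  using Henstock_Kurzweil_Integration.integral_combine[OF _ _ pv_near_integrable[OF c w], of d] d
  by simp

lemma norm_integral_pv_near_le:
  assumes c: "decaying_ratfun p q" and w: "w > 0" and d: "d \<in> {0..1}"
    and B: "\<And>u. u \<in> {0..1} \<Longrightarrow> norm (pv_near (ratfun p q) w u) \<le> B" "B \<ge> 0"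
  shows "norm (integral {0..d} (pv_near (ratfun p q) w)) \<le> B * d"
proof -
  have "pv_near (ratfun p q) w integrable_on {0..d}"
    by (rule integrable_on_subinterval[OF pv_near_integrable[OF c w]]) (use d in auto)
  from has_integral_bound_real[OF B(2) finite.emptyI integrable_integral[OF this]] B(1) d
  show ?thesis by (auto simp: content_real)
qed

lemma powr_bounded_pv_rescaled:
  assumes c: "decaying_ratfun p q"
  shows "powr_bounded 0 (pv_rescaled (ratfun p q))"
proof -
  obtain B where B: "B \<ge> 0" "\<And>y. y \<ge> 0 \<Longrightarrow> norm (ratfun p q y) \<le> B"
    "\<And>y. y > 0 \<Longrightarrow> norm (ratfun p q y) \<le> B / y ^ 2"
    "\<And>y. y > 0 \<Longrightarrow> norm (ratfun (quotient_deriv_num p q) (q * q) y) \<le> B / y ^ 3"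
    using decaying_ratfun_bounds[OF c] by metis
  show ?thesis
  proof (rule powr_boundedI[of 1 _ "17 * B"])
    fix w :: real assume w: "w \<ge> 1"
    have "norm (integral {0..1} (pv_near (ratfun p q) w)) \<le> 16 * B * 1"
      by (rule norm_integral_pv_near_le[OF c]) (use norm_pv_near_le_uniform[OF c w _ B(1,2,4)] B(1) w in auto)
    moreover have "norm (integral {2..} (pv_far (ratfun p q) w)) \<le> (2 * B / w ^ 2) * 2 powr -2 / 2"
      using pv_far_tail[OF continuous_on_decaying_ratfun[OF c] B(3,1)] w by simp
    moreover have "(2 * B / w ^ 2) * 2 powr -2 / 2 \<le> B"
    proof -
      have "1 \<le> w ^ 2" using w by (simp add: one_le_power)
      then show ?thesis using B(1) by (simp add: powr_neg_numeral divide_le_eq mult_le_cancel_left1)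
    qed
    ultimately have "norm (pv_rescaled (ratfun p q) w) \<le> 16 * B + B"
      unfolding pv_rescaled_def by (smt (verit) norm_triangle_ineq)
    then show "norm (pv_rescaled (ratfun p q) w) \<le> 17 * B * w powr 0" using w by simp
  qed
qed

lemma pv_rescaled_minus_truncated:
  assumes c: "decaying_ratfun p q" and w: "w > 0"
  shows "pv_rescaled (ratfun p q) w - pv_truncated (ratfun p q) n w =
    integral {0..1 / (real n + 2)} (pv_near (ratfun p q) w) + integral {real n + 2..} (pv_far (ratfun p q) w)"
proof -
  obtain B where B: "B \<ge> 0" "\<And>y. y > 0 \<Longrightarrow> norm (ratfun p q y) \<le> B / y ^ 2"
    using decaying_ratfun_bounds[OF c] by metis
  show ?thesis
    unfolding pv_rescaled_def pv_truncated_def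
    using integral_pv_near_split[OF c w, of "1 / (real n + 2)"]
      integral_pv_far_split[OF continuous_on_decaying_ratfun[OF c] B(2,1) w, of "real n + 2"]
    by simp
qed

lemma pv_truncated_error_bound:
  assumes c: "decaying_ratfun p q" and a: "a > 0"
  obtains K where "\<And>n x. x \<in> {a..b} \<Longrightarrow>
    norm (pv_rescaled (ratfun p q) x - pv_truncated (ratfun p q) n x) \<le> K / (real n + 2)"
proof -
  obtain B where B: "B \<ge> 0" "\<And>y. y > 0 \<Longrightarrow> norm (ratfun p q y) \<le> B / y ^ 2"
    "\<And>y. y \<ge> 0 \<Longrightarrow> norm (ratfun (quotient_deriv_num p q) (q * q) y) \<le> B"
    using decaying_ratfun_bounds[OF c] by metis
  show ?thesis
  proof (rule that[of "2 * b * B + B / a ^ 2"])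
    fix n x assume x: "x \<in> {a..b}"
    define N where "N = real n + 2"
    have x0: "x > 0" and N: "N \<ge> 2" using x a by (auto simp: N_def)
    have "norm (integral {0..1 / N} (pv_near (ratfun p q) x)) \<le> (2 * x * B) * (1 / N)"
      by (rule norm_integral_pv_near_le[OF c x0])
         (use norm_pv_near_decaying_ratfun_le[OF c x0 _ B(3)] B(1) x0 N in auto)
    also have "\<dots> \<le> (2 * b * B) * (1 / N)" using x B(1) N by (intro mult_right_mono) auto
    finally have near: "norm (integral {0..1 / N} (pv_near (ratfun p q) x)) \<le> (2 * b * B) * (1 / N)" .
    have "norm (integral {N..} (pv_far (ratfun p q) x)) \<le> (2 * B / x ^ 2) * N powr -2 / 2"
      by (rule pv_far_tail(2)[OF continuous_on_decaying_ratfun[OF c] B(2,1) x0 N])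
    also have "\<dots> = (B / x ^ 2) / N ^ 2" using N by (simp add: powr_neg_numeral)
    also have "\<dots> \<le> (B / a ^ 2) / N"
    proof (rule frac_le)
      show "B / x ^ 2 \<le> B / a ^ 2" using x a B(1) by (intro divide_left_mono power_mono mult_pos_pos) auto
      show "N \<le> N ^ 2" using N by (simp add: power2_eq_square)
    qed (use B(1) N in auto)
    finally have far: "norm (integral {N..} (pv_far (ratfun p q) x)) \<le> (B / a ^ 2) / N" .
    have "norm (pv_rescaled (ratfun p q) x - pv_truncated (ratfun p q) n x)
        \<le> norm (integral {0..1 / N} (pv_near (ratfun p q) x)) + norm (integral {N..} (pv_far (ratfun p q) x))"
      unfolding pv_rescaled_minus_truncated[OF c x0] N_def by (rule norm_triangle_ineq)
    also have "\<dots> \<le> (2 * b * B + B / a ^ 2) / N" using near far by (simp add: add_divide_distrib)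
    finally show "norm (pv_rescaled (ratfun p q) x - pv_truncated (ratfun p q) n x)
        \<le> (2 * b * B + B / a ^ 2) / (real n + 2)" by (simp add: N_def)
  qed
qed

lemma pv_truncated_uniform_limit:
  assumes c: "decaying_ratfun p q" and a: "a > 0"
  shows "uniform_limit {a..b} (pv_truncated (ratfun p q)) (pv_rescaled (ratfun p q)) sequentially"
proof (rule uniform_limitI)
  fix e :: real assume e: "e > 0"
  obtain K where K: "\<And>n x. x \<in> {a..b} \<Longrightarrow>
      norm (pv_rescaled (ratfun p q) x - pv_truncated (ratfun p q) n x) \<le> K / (real n + 2)"
    using pv_truncated_error_bound[OF c a] by metis
  have "LIM n sequentially. real n + 2 :> at_top"
    by (subst add.commute) (rule filterlim_tendsto_add_at_top[OF tendsto_const filterlim_real_sequentially])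
  then have "(\<lambda>n. K / (real n + 2)) \<longlonglongrightarrow> 0"
    by (intro tendsto_divide_0[OF tendsto_const] filterlim_at_top_imp_at_infinity)
  then have "eventually (\<lambda>n. K / (real n + 2) < e) sequentially"
    using e by (rule order_tendstoD)
  then show "eventually (\<lambda>n. \<forall>x\<in>{a..b}.
      dist (pv_truncated (ratfun p q) n x) (pv_rescaled (ratfun p q) x) < e) sequentially"
  proof eventually_elim
    case (elim n)
    show ?case
    proof
      fix x assume x: "x \<in> {a..b}"
      have "dist (pv_truncated (ratfun p q) n x) (pv_rescaled (ratfun p q) x) \<le> K / (real n + 2)"
        using K[OF x] by (simp add: dist_norm norm_minus_commute)
      then show "dist (pv_truncated (ratfun p q) n x) (pv_rescaled (ratfun p q) x) < e"
        using elim by linarith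
    qed
  qed
qed

lemma pv_near_has_vector_derivative:
  assumes g': "\<And>y. y \<ge> 0 \<Longrightarrow> (g has_vector_derivative g' y) (at y)"
    and x: "x > 0" and t: "t \<in> {0<..1}"
  shows "((\<lambda>x. pv_near g x t) has_vector_derivative
          pv_near (\<lambda>y. of_real y * g' y) x t / of_real x) (at x within U)"
proof -
  have chain: "((\<lambda>x. g (x * c)) has_vector_derivative c *\<^sub>R g' (x * c)) (at x within U)"
    if "c \<ge> 0" for c
  proof -
    have "((\<lambda>x. x * c) has_vector_derivative c) (at x within U)"
      by (auto intro!: derivative_eq_intros simp: has_real_derivative_iff_has_vector_derivative[symmetric])
    moreover have "(g has_vector_derivative g' (x * c)) (at (x * c) within (\<lambda>x. x * c) ` U)"
      using g'[of "x * c"] x that by (auto intro: has_vector_derivative_at_within)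
    ultimately show ?thesis using vector_diff_chain_within by (simp add: o_def) blast
  qed
  have "((\<lambda>x. (1 / t) *\<^sub>R (g (x * (1 + t)) - g (x * (1 - t)))) has_vector_derivative
        (1 / t) *\<^sub>R ((1 + t) *\<^sub>R g' (x * (1 + t)) - (1 - t) *\<^sub>R g' (x * (1 - t)))) (at x within U)"
    using t by (intro bounded_linear.has_vector_derivative[OF bounded_linear_scaleR_right]
        has_vector_derivative_diff chain) auto
  moreover have "(\<lambda>x. (1 / t) *\<^sub>R (g (x * (1 + t)) - g (x * (1 - t)))) = (\<lambda>x. pv_near g x t)"
    by (simp add: pv_near_def scaleR_conv_of_real divide_inverse mult.commute)
  moreover have "(1 / t) *\<^sub>R ((1 + t) *\<^sub>R g' (x * (1 + t)) - (1 - t) *\<^sub>R g' (x * (1 - t)))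
      = pv_near (\<lambda>y. of_real y * g' y) x t / of_real x"
    using x t by (simp add: pv_near_def scaleR_conv_of_real field_simps)
  ultimately show ?thesis by simp
qed

lemma pv_far_has_vector_derivative:
  assumes g': "\<And>y. y \<ge> 0 \<Longrightarrow> (g has_vector_derivative g' y) (at y)"
    and x: "x > 0" and t: "t \<ge> 2"
  shows "((\<lambda>x. pv_far g x t) has_vector_derivative
          pv_far (\<lambda>y. of_real y * g' y) x t / of_real x) (at x within U)"
proof -
  have "((\<lambda>x. x * t) has_vector_derivative t) (at x within U)"
    by (auto intro!: derivative_eq_intros simp: has_real_derivative_iff_has_vector_derivative[symmetric])
  moreover have "(g has_vector_derivative g' (x * t)) (at (x * t) within (\<lambda>x. x * t) ` U)"
    using g'[of "x * t"] x t by (auto intro: has_vector_derivative_at_within)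
  ultimately have "((\<lambda>x. g (x * t)) has_vector_derivative t *\<^sub>R g' (x * t)) (at x within U)"
    using vector_diff_chain_within by (simp add: o_def) blast
  then have "((\<lambda>x. (1 / (t - 1)) *\<^sub>R g (x * t)) has_vector_derivative
        (1 / (t - 1)) *\<^sub>R (t *\<^sub>R g' (x * t))) (at x within U)"
    by (rule bounded_linear.has_vector_derivative[OF bounded_linear_scaleR_right])
  moreover have "(\<lambda>x. (1 / (t - 1)) *\<^sub>R g (x * t)) = (\<lambda>x. pv_far g x t)"
    by (simp add: pv_far_def scaleR_conv_of_real divide_inverse mult.commute mult.left_commute)
  moreover have "(1 / (t - 1)) *\<^sub>R (t *\<^sub>R g' (x * t)) = pv_far (\<lambda>y. of_real y * g' y) x t / of_real x"
    using x t by (simp add: pv_far_def scaleR_conv_of_real field_simps)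
  ultimately show ?thesis by (simp add: mult.commute)
qed

lemma integral_pv_near_has_vector_derivative:
  fixes g g' :: "real \<Rightarrow> complex"
  assumes g: "continuous_on {0..} g" and g'_cont: "continuous_on {0..} g'"
    and g': "\<And>y. y \<ge> 0 \<Longrightarrow> (g has_vector_derivative g' y) (at y)"
    and a: "a > 0" and d: "d > 0" and x: "x \<in> {a..b}"
  shows "((\<lambda>x. integral {d..1} (pv_near g x)) has_vector_derivative
      integral {d..1} (pv_near (\<lambda>y. of_real y * g' y) x) / of_real x) (at x within {a..b})"
proof -
  define h where "h = (\<lambda>y. of_real y * g' y)"
  have h: "continuous_on {0..} h" unfolding h_def by (intro continuous_intros g'_cont)
  have "((\<lambda>x. integral (cbox d 1) (pv_near g x)) has_vector_derivative
      integral (cbox d 1) (\<lambda>t. pv_near h x t / of_real x)) (at x within {a..b})"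
  proof (rule leibniz_rule_vector_derivative)
    fix y t assume "y \<in> {a..b}" "t \<in> cbox d 1"
    then show "((\<lambda>x. pv_near g x t) has_vector_derivative pv_near h y t / of_real y) (at y within {a..b})"
      unfolding h_def by (intro pv_near_has_vector_derivative[OF g']) (use a d in auto)
  next
    fix y assume "y \<in> {a..b}"
    then show "pv_near g y integrable_on cbox d 1"
      unfolding cbox_interval
      by (intro integrable_continuous_interval continuous_on_subset[OF continuous_on_pv_near[OF g]])
         (use a d in auto)
  next
    have "continuous_on ({a..b} \<times> {d..1}) (\<lambda>z. (h (fst z * (1 + snd z)) - h (fst z * (1 - snd z)))
        / of_real (snd z) / of_real (fst z))"
      by (intro continuous_intros continuous_on_compose2[OF h]) (use a d in auto)
    then show "continuous_on ({a..b} \<times> cbox d 1) (\<lambda>(x, t). pv_near h x t / of_real x)"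
      by (simp add: pv_near_def case_prod_beta' cbox_interval)
  qed (use x in auto)
  then show ?thesis by (simp add: cbox_interval h_def)
qed

lemma integral_pv_far_has_vector_derivative:
  fixes g g' :: "real \<Rightarrow> complex"
  assumes g: "continuous_on {0..} g" and g'_cont: "continuous_on {0..} g'"
    and g': "\<And>y. y \<ge> 0 \<Longrightarrow> (g has_vector_derivative g' y) (at y)"
    and a: "a > 0" and x: "x \<in> {a..b}"
  shows "((\<lambda>x. integral {2..M} (pv_far g x)) has_vector_derivative
      integral {2..M} (pv_far (\<lambda>y. of_real y * g' y) x) / of_real x) (at x within {a..b})"
proof -
  define h where "h = (\<lambda>y. of_real y * g' y)"
  have h: "continuous_on {0..} h" unfolding h_def by (intro continuous_intros g'_cont)
  have "((\<lambda>x. integral (cbox 2 M) (pv_far g x)) has_vector_derivative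
      integral (cbox 2 M) (\<lambda>t. pv_far h x t / of_real x)) (at x within {a..b})"
  proof (rule leibniz_rule_vector_derivative)
    fix y t assume "y \<in> {a..b}" "t \<in> cbox 2 M"
    then show "((\<lambda>x. pv_far g x t) has_vector_derivative pv_far h y t / of_real y) (at y within {a..b})"
      unfolding h_def by (intro pv_far_has_vector_derivative[OF g']) (use a in \<open>auto simp: cbox_interval\<close>)
  next
    fix y assume "y \<in> {a..b}"
    then show "pv_far g y integrable_on cbox 2 M"
      unfolding cbox_interval
      by (intro integrable_continuous_interval continuous_on_subset[OF continuous_on_pv_far[OF g, of y "3/2"]])
         (use a in auto)
  next
    have "continuous_on ({a..b} \<times> {2..M}) (\<lambda>z. h (fst z * snd z) / of_real (snd z - 1) / of_real (fst z))"
      by (intro continuous_intros continuous_on_compose2[OF h]) (use a in auto)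
    then show "continuous_on ({a..b} \<times> cbox 2 M) (\<lambda>(x, t). pv_far h x t / of_real x)"
      by (simp add: pv_far_def case_prod_beta' cbox_interval)
  qed (use x in auto)
  then show ?thesis by (simp add: cbox_interval h_def)
qed

lemma pv_truncated_has_vector_derivative:
  fixes g g' :: "real \<Rightarrow> complex"
  assumes "continuous_on {0..} g" "continuous_on {0..} g'"
    and "\<And>y. y \<ge> 0 \<Longrightarrow> (g has_vector_derivative g' y) (at y)"
    and "a > 0" "x \<in> {a..b}"
  shows "(pv_truncated g n has_vector_derivative
      pv_truncated (\<lambda>y. of_real y * g' y) n x / of_real x) (at x within {a..b})"
  using has_vector_derivative_add[OF integral_pv_near_has_vector_derivative[OF assms(1-4) _ assms(5),
      of "1 / (real n + 2)"] integral_pv_far_has_vector_derivative[OF assms, of "real n + 2"]]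
  by (simp add: pv_truncated_def[abs_def] add_divide_distrib)

lemma has_vector_derivative_sequence_limit:
  fixes f :: "nat \<Rightarrow> real \<Rightarrow> 'a::banach"
  assumes w: "a < w" "w < b"
    and f': "\<And>n x. x \<in> {a..b} \<Longrightarrow> (f n has_vector_derivative f' n x) (at x within {a..b})"
    and unif: "uniform_limit {a..b} f' g sequentially"
    and lim: "\<And>x. x \<in> {a..b} \<Longrightarrow> (\<lambda>n. f n x) \<longlonglongrightarrow> F x"
  shows "(F has_vector_derivative g w) (at w)"
proof -
  have nle: "\<forall>\<^sub>F n in sequentially. \<forall>x\<in>{a..b}. \<forall>h. norm (h *\<^sub>R f' n x - h *\<^sub>R g x) \<le> e * norm h"
    if e: "e > 0" for e
    using uniform_limitD[OF unif e]
  proof eventually_elim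
    case (elim n)
    show ?case
    proof (intro ballI allI)
      fix x and h :: real assume "x \<in> {a..b}"
      then have "norm (f' n x - g x) \<le> e" using elim by (simp add: dist_norm less_imp_le)
      then have "norm h * norm (f' n x - g x) \<le> norm h * e" by (rule mult_left_mono) simp
      then show "norm (h *\<^sub>R f' n x - h *\<^sub>R g x) \<le> e * norm h"
        by (simp add: scaleR_diff_right[symmetric] mult.commute)
    qed
  qed
  have cvx: "convex {a..b}" by (rule convex_real_interval(5))
  have wab: "w \<in> {a..b}" using w by auto
  have "(f n has_derivative (\<lambda>h. h *\<^sub>R f' n x)) (at x within {a..b})" if "x \<in> {a..b}" for n x
    using f'[OF that] unfolding has_vector_derivative_def .
  from has_derivative_sequence[OF cvx this nle wab lim[OF wab]]
  obtain G where G: "\<forall>x\<in>{a..b}. (\<lambda>n. f n x) \<longlonglongrightarrow> G x \<and>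
      (G has_derivative (\<lambda>h. h *\<^sub>R g x)) (at x within {a..b})"
    by blast
  have GF: "G x = F x" if "x \<in> {a..b}" for x
    using G that lim[OF that] LIMSEQ_unique by blast
  have at_w: "at w within {a..b} = at w"
    by (rule at_within_interior) (use w in auto)
  have "(G has_derivative (\<lambda>h. h *\<^sub>R g w)) (at w within {a..b})" using G wab by blast
  then have "(G has_derivative (\<lambda>h. h *\<^sub>R g w)) (at w)" by (simp only: at_w)
  then have "(F has_derivative (\<lambda>h. h *\<^sub>R g w)) (at w)"
    by (rule has_derivative_transform_within_open[where s="{a<..<b}"]) (use w GF in auto)
  then show ?thesis unfolding has_vector_derivative_def .
qed

lemma uniform_limit_divide_of_real:
  fixes f :: "'b \<Rightarrow> real \<Rightarrow> complex"
  assumes lim: "uniform_limit S f g F" and a: "a > 0" "\<And>x. x \<in> S \<Longrightarrow> x \<ge> a"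
  shows "uniform_limit S (\<lambda>n x. f n x / of_real x) (\<lambda>x. g x / of_real x) F"
proof (rule uniform_limitI)
  fix e :: real assume e: "e > 0"
  have "eventually (\<lambda>n. \<forall>x\<in>S. dist (f n x) (g x) < e * a) F"
    using uniform_limitD[OF lim] e a by simp
  then show "eventually (\<lambda>n. \<forall>x\<in>S. dist (f n x / of_real x) (g x / of_real x) < e) F"
  proof eventually_elim
    case (elim n)
    show ?case
    proof
      fix x assume x: "x \<in> S"
      then have "x > 0" using a by force
      then have "dist (f n x / of_real x) (g x / of_real x) = dist (f n x) (g x) / x"
        by (simp add: dist_norm diff_divide_distrib[symmetric] norm_divide)
      also have "\<dots> < e * a / a"
        using elim x a by (intro frac_less) auto
      finally show "dist (f n x / of_real x) (g x / of_real x) < e" using a by simp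
    qed
  qed
qed

lemma pv_rescaled_has_vector_derivative:
  assumes c: "decaying_ratfun p q" and w: "w > 0"
  shows "(pv_rescaled (ratfun p q) has_vector_derivative
      pv_rescaled (ratfun (euler_num p q) (q * q)) w / of_real w) (at w)"
proof (rule has_vector_derivative_sequence_limit[of "w / 2" w "2 * w"])
  let ?g = "ratfun p q" and ?h = "ratfun (euler_num p q) (q * q)"
  have h: "?h = (\<lambda>y. of_real y * ratfun (quotient_deriv_num p q) (q * q) y)"
    by (simp add: fun_eq_iff ratfun_euler_num)
  fix n x assume "x \<in> {w / 2..2 * w}"
  then show "(pv_truncated ?g n has_vector_derivative pv_truncated ?h n x / of_real x)
      (at x within {w / 2..2 * w})"
    unfolding h using c w
    by (intro pv_truncated_has_vector_derivative continuous_on_decaying_ratfun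
        continuous_on_ratfun decaying_ratfun_has_vector_derivative)
       (auto simp: decaying_ratfun_def)
next
  show "uniform_limit {w / 2..2 * w} (\<lambda>n x. pv_truncated (ratfun (euler_num p q) (q * q)) n x / of_real x)
      (\<lambda>x. pv_rescaled (ratfun (euler_num p q) (q * q)) x / of_real x) sequentially"
    using w by (intro uniform_limit_divide_of_real[of _ _ _ _ "w / 2"] pv_truncated_uniform_limit
        decaying_ratfun_euler_num[OF c]) auto
next
  fix x assume "x \<in> {w / 2..2 * w}"
  then show "(\<lambda>n. pv_truncated (ratfun p q) n x) \<longlonglongrightarrow> pv_rescaled (ratfun p q) x"
    using pv_truncated_uniform_limit[OF c, of x x] w by (auto simp: uniform_limit_singleton)
qed (use w in auto)

lemma symbol_inverse: "symbol j (-1) (\<lambda>x. complex_of_real (1 / x))"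
proof -
  have "symbol j (-1) (ratfun [:1:] [:0, 1:])"
    using symbol_ratfun[of "[:0, 1:]" "[:1:]" "-1" j] by simp
  then show ?thesis by (rule symbol_cong) (simp add: ratfun_def)
qed

lemma symbol_pv_rescaled: "decaying_ratfun p q \<Longrightarrow> symbol j 0 (pv_rescaled (ratfun p q))"
proof (induction j arbitrary: p q)
  case 0 then show ?case using powr_bounded_pv_rescaled by simp
next
  case (Suc j)
  have "symbol j (-1 + 0)
      (\<lambda>x. complex_of_real (1 / x) * pv_rescaled (ratfun (euler_num p q) (q * q)) x)"
    by (rule symbol_bilinear[OF symbol_inverse Suc.IH[OF decaying_ratfun_euler_num[OF Suc.prems]]
          bounded_bilinear_mult])
  then show ?case
    using Suc.prems pv_rescaled_has_vector_derivative powr_bounded_pv_rescaled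
    by (intro symbol_SucI[where F'="\<lambda>x. complex_of_real (1 / x) * pv_rescaled (ratfun (euler_num p q) (q * q)) x"])
       (auto simp: divide_inverse mult.commute)
qed

lemma has_integral_affine_substitution:
  fixes F :: "real \<Rightarrow> complex"
  assumes m: "m > 0" and F: "(F has_integral i) {A..B}"
  shows "((\<lambda>x. F (x / m + c)) has_integral (of_real m * i)) {m * (A - c)..m * (B - c)}"
proof -
  have "((\<lambda>x. F ((1 / m) *\<^sub>R x + c)) has_integral (i /\<^sub>R (1 / m) ^ DIM(real)))
           (cbox ((A - c) /\<^sub>R (1 / m)) ((B - c) /\<^sub>R (1 / m)))"
    by (rule has_integral_affinity') (use F m in \<open>auto simp: cbox_interval\<close>)
  moreover have "(\<lambda>x. F ((1 / m) *\<^sub>R x + c)) = (\<lambda>x. F (x / m + c))" by (simp add: divide_inverse mult.commute)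
  moreover have "i /\<^sub>R (1 / m) ^ DIM(real) = of_real m * i" by (simp add: scaleR_conv_of_real)
  moreover have "cbox ((A - c) /\<^sub>R (1 / m)) ((B - c) /\<^sub>R (1 / m)) = {m * (A - c)..m * (B - c)}"
    by (simp add: cbox_interval mult.commute)
  ultimately show ?thesis by simp
qed

lemma has_integral_cauchy_kernel_above:
  fixes g :: "real \<Rightarrow> complex"
  assumes w: "w > 0" and d: "d > 0" "d \<le> 1"
    and F: "((\<lambda>u. g (w * (1 + u)) / of_real u) has_integral i) {d..1}"
  shows "((\<lambda>x. g x / of_real (x - w)) has_integral i) {w * d + w..2 * w}"
proof -
  have h0: "((\<lambda>x. g (w * (1 + (x / w + -1))) / of_real (x / w + -1)) has_integral (of_real w * i))
          {w * (d - -1)..w * (1 - -1)}"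
    by (rule has_integral_affine_substitution[OF w F])
  have eqI: "{w * (d - -1)..w * (1 - -1)} = {w * d + w..2 * w}" by (simp add: algebra_simps)
  have h: "((\<lambda>x. g (w * (1 + (x / w + -1))) / of_real (x / w + -1)) has_integral (of_real w * i))
          {w * d + w..2 * w}" using h0 unfolding eqI .
  have "((\<lambda>x. of_real w * (g x / of_real (x - w))) has_integral (of_real w * i)) {w * d + w..2 * w}"
  proof (rule has_integral_eq[OF _ h])
    fix x assume x: "x \<in> {w * d + w..2 * w}"
    moreover have "w * d > 0" using w d by simp
    ultimately have xw: "x - w \<noteq> 0" by auto
    have "complex_of_real (x / w + -1) = of_real (x - w) / of_real w"
      using w by (simp add: field_simps)
    then show "g (w * (1 + (x / w + -1))) / of_real (x / w + -1) = of_real w * (g x / of_real (x - w))"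
      using w xw by (simp add: field_simps)
  qed
  then have "((\<lambda>x. g x / of_real (x - w)) has_integral (of_real w * i) / of_real w) {w * d + w..2 * w}"
    by (subst (asm) has_integral_mult_right_iff) (use w in auto)
  then show ?thesis using w by simp
qed

lemma has_integral_cauchy_kernel_below:
  fixes g :: "real \<Rightarrow> complex"
  assumes w: "w > 0" and d: "d > 0" "d \<le> 1"
    and F: "((\<lambda>u. g (w * (1 - u)) / of_real u) has_integral i) {d..1}"
  shows "((\<lambda>x. g x / of_real (x - w)) has_integral -i) {0..w - w * d}"
proof -
  have G: "((\<lambda>v. g (w * (1 - - v)) / of_real (- v)) has_integral i) {-1..-d}"
    using F by (subst has_integral_reflect_real[symmetric]) simp
  have h0: "((\<lambda>x. g (w * (1 - - (x / w + -1))) / of_real (- (x / w + -1))) has_integral (of_real w * i))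
          {w * (-1 - -1)..w * (-d - -1)}"
    by (rule has_integral_affine_substitution[OF w G])
  have eqI: "{w * (-1 - -1)..w * (-d - -1)} = {0..w - w * d}" by (simp add: algebra_simps)
  have h: "((\<lambda>x. g (w * (1 - - (x / w + -1))) / of_real (- (x / w + -1))) has_integral (of_real w * i))
          {0..w - w * d}" using h0 unfolding eqI .
  have "((\<lambda>x. of_real (- w) * (g x / of_real (x - w))) has_integral (of_real w * i)) {0..w - w * d}"
  proof (rule has_integral_eq[OF _ h])
    fix x assume x: "x \<in> {0..w - w * d}"
    moreover have "w * d > 0" using w d by simp
    ultimately have xw: "x - w \<noteq> 0" by auto
    have "complex_of_real (- (x / w + -1)) = - of_real (x - w) / of_real w"
      using w by (simp add: field_simps)
    then show "g (w * (1 - - (x / w + -1))) / of_real (- (x / w + -1)) = of_real (- w) * (g x / of_real (x - w))"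
      using w xw by (simp add: field_simps)
  qed
  then have "((\<lambda>x. g x / of_real (x - w)) has_integral (of_real w * i) / of_real (- w)) {0..w - w * d}"
    by (subst (asm) has_integral_mult_right_iff) (use w in auto)
  then show ?thesis using w by simp
qed

lemma has_integral_cauchy_kernel_far:
  fixes g :: "real \<Rightarrow> complex"
  assumes w: "w > 0" and M: "M \<ge> 2"
    and F: "(pv_far g w has_integral i) {2..M}"
  shows "((\<lambda>x. g x / of_real (x - w)) has_integral i) {2 * w..w * M}"
proof -
  have h0: "((\<lambda>x. pv_far g w (x / w + 0)) has_integral (of_real w * i)) {w * (2 - 0)..w * (M - 0)}"
    by (rule has_integral_affine_substitution[OF w F])
  have eqI: "{w * (2 - 0)..w * (M - 0)} = {2 * w..w * M}" by (simp add: algebra_simps)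
  have h: "((\<lambda>x. pv_far g w (x / w + 0)) has_integral (of_real w * i)) {2 * w..w * M}" using h0 unfolding eqI .
  have "((\<lambda>x. of_real w * (g x / of_real (x - w))) has_integral (of_real w * i)) {2 * w..w * M}"
  proof (rule has_integral_eq[OF _ h])
    fix x assume x: "x \<in> {2 * w..w * M}"
    then have xw: "x - w \<noteq> 0" using w by auto
    have "complex_of_real (x / w + 0 - 1) = of_real (x - w) / of_real w"
      using w by (simp add: field_simps)
    then show "pv_far g w (x / w + 0) = of_real w * (g x / of_real (x - w))"
      using w xw by (simp add: pv_far_def field_simps)
  qed
  then have "((\<lambda>x. g x / of_real (x - w)) has_integral (of_real w * i) / of_real w) {2 * w..w * M}"
    by (subst (asm) has_integral_mult_right_iff) (use w in auto)
  then show ?thesis using w by simp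
qed

lemma has_integral_cauchy_kernel_near:
  fixes g :: "real \<Rightarrow> complex"
  assumes g: "continuous_on {0..} g" and w: "w > 0" and d: "d > 0" "d \<le> 1"
  shows "((\<lambda>x. g x / of_real (x - w)) has_integral integral {d..1} (pv_near g w))
    ({0..w - w * d} \<union> {w + w * d..2 * w})"
proof -
  have "continuous_on {d..1} (\<lambda>u. g (w * (1 + u)) / of_real u)"
    "continuous_on {d..1} (\<lambda>u. g (w * (1 - u)) / of_real u)"
    by (intro continuous_intros continuous_on_compose2[OF g], use w d in auto)+
  then have above: "((\<lambda>u. g (w * (1 + u)) / of_real u) has_integral
        integral {d..1} (\<lambda>u. g (w * (1 + u)) / of_real u)) {d..1}"
    and below: "((\<lambda>u. g (w * (1 - u)) / of_real u) has_integral
        integral {d..1} (\<lambda>u. g (w * (1 - u)) / of_real u)) {d..1}"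
    by (auto intro: integrable_integral integrable_continuous_interval)
  have "((\<lambda>x. g x / of_real (x - w)) has_integral
      - integral {d..1} (\<lambda>u. g (w * (1 - u)) / of_real u)
      + integral {d..1} (\<lambda>u. g (w * (1 + u)) / of_real u)) ({0..w - w * d} \<union> {w + w * d..2 * w})"
  proof (rule has_integral_Un)
    have "w * d > 0" using w d by simp
    then show "negligible ({0..w - w * d} \<inter> {w + w * d..2 * w})"
      by (intro negligible_subset[OF negligible_empty]) auto
  qed (use has_integral_cauchy_kernel_below[OF w d below]
        has_integral_cauchy_kernel_above[OF w d above] in \<open>simp_all add: add.commute\<close>)
  moreover have "integral {d..1} (pv_near g w)
      = integral {d..1} (\<lambda>u. g (w * (1 + u)) / of_real u) - integral {d..1} (\<lambda>u. g (w * (1 - u)) / of_real u)"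
    using integral_diff[OF has_integral_integrable[OF above] has_integral_integrable[OF below]]
    by (simp add: pv_near_def[abs_def] diff_divide_distrib)
  ultimately show ?thesis by simp
qed

lemma cauchy_kernel_tail:
  fixes g :: "real \<Rightarrow> complex"
  assumes g: "continuous_on {0..} g"
    and B: "\<And>y. y > 0 \<Longrightarrow> norm (g y) \<le> B / y ^ 2" "B \<ge> 0"
    and w: "w > 0" and A: "A \<ge> 2 * w"
  shows "(\<lambda>x. g x / of_real (x - w)) integrable_on {A..}"
    "norm (integral {A..} (\<lambda>x. g x / of_real (x - w))) \<le> (2 * B) * A powr -2 / 2"
proof -
  have A0: "A > 0" using w A by simp
  have "continuous_on {A..} g" by (rule continuous_on_subset[OF g]) (use A0 in auto)
  then have cont: "continuous_on {A..} (\<lambda>x. g x / of_real (x - w))"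
    by (intro continuous_intros) (use w A in auto)
  have bound: "norm (g x / of_real (x - w)) \<le> (2 * B) * x powr -3" if x: "x \<ge> A" for x
  proof -
    have x0: "x > 0" "x - w \<ge> x / 2" using x A w by auto
    have nt: "norm (complex_of_real (x - w)) = x - w" using x0 by (subst norm_of_real) simp
    have "norm (g x / of_real (x - w)) = norm (g x) / (x - w)"
      unfolding norm_divide nt ..
    also have "\<dots> \<le> (B / x ^ 2) / (x / 2)"
      using B(1)[OF x0(1)] x0 B(2) by (intro frac_le) auto
    also have "\<dots> = (2 * B) * x powr -3"
      using x0 by (simp add: powr_minus powr_realpow field_simps power2_eq_square power3_eq_cube)
    finally show ?thesis .
  qed
  show "(\<lambda>x. g x / of_real (x - w)) integrable_on {A..}"
    "norm (integral {A..} (\<lambda>x. g x / of_real (x - w))) \<le> (2 * B) * A powr -2 / 2"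
    using integral_tail_cubic_decay[OF A0 cont bound] by auto
qed

lemma has_integral_cauchy_kernel_bounded:
  fixes g :: "real \<Rightarrow> complex"
  assumes g: "continuous_on {0..} g" and w: "w > 0" and d: "d > 0" "d \<le> 1" and M: "M \<ge> 2"
  shows "((\<lambda>x. g x / of_real (x - w)) has_integral integral {d..1} (pv_near g w) + integral {2..M} (pv_far g w))
    ({0..w - w * d} \<union> {w + w * d..w * M})"
proof -
  have wd: "w * d > 0" "w * d \<le> w" and wM: "w * M \<ge> 2 * w" using w d M by simp_all
  have "pv_far g w integrable_on {2..M}"
    by (rule integrable_continuous_interval, rule continuous_on_subset[OF continuous_on_pv_far[OF g w, of "3/2"]])
       auto
  then have far: "((\<lambda>x. g x / of_real (x - w)) has_integral integral {2..M} (pv_far g w)) {2 * w..w * M}"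
    by (intro has_integral_cauchy_kernel_far[OF w M] integrable_integral)
  have "((\<lambda>x. g x / of_real (x - w)) has_integral integral {d..1} (pv_near g w) + integral {2..M} (pv_far g w))
      (({0..w - w * d} \<union> {w + w * d..2 * w}) \<union> {2 * w..w * M})"
  proof (rule has_integral_Un[OF has_integral_cauchy_kernel_near[OF g w d] far])
    have "({0..w - w * d} \<union> {w + w * d..2 * w}) \<inter> {2 * w..w * M} \<subseteq> {2 * w}"
      using w wd by auto
    then show "negligible (({0..w - w * d} \<union> {w + w * d..2 * w}) \<inter> {2 * w..w * M})"
      by (rule negligible_subset[rotated]) simp
  qed
  moreover have "({0..w - w * d} \<union> {w + w * d..2 * w}) \<union> {2 * w..w * M} = {0..w - w * d} \<union> {w + w * d..w * M}"
    unfolding set_eq_iff atLeastAtMost_iff Un_iff using w wd wM by (intro allI) (smt (verit))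
  ultimately show ?thesis by simp
qed

lemma pv_cutoff_integral_eq:
  assumes c: "decaying_ratfun p q" and w: "w > 0" and e: "e > 0" "e < w" and M: "M \<ge> 2"
  shows "integral ({0<..<w - e} \<union> {w + e<..}) (\<lambda>x. ratfun p q x / of_real (x - w))
    = pv_rescaled (ratfun p q) w - integral {0..e / w} (pv_near (ratfun p q) w)
      - integral {M..} (pv_far (ratfun p q) w) + integral {w * M..} (\<lambda>x. ratfun p q x / of_real (x - w))"
proof -
  let ?g = "ratfun p q" and ?f = "\<lambda>x. ratfun p q x / of_real (x - w)"
  define d where "d = e / w"
  have d: "d > 0" "d \<le> 1" "w * d = e" using w e by (auto simp: d_def)
  obtain B where B: "B \<ge> 0" "\<And>y. y > 0 \<Longrightarrow> norm (ratfun p q y) \<le> B / y ^ 2"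
    using decaying_ratfun_bounds[OF c] by metis
  note g = continuous_on_decaying_ratfun[OF c]
  have wM: "w * M \<ge> 2 * w" using w M by simp
  have "(?f has_integral (integral {d..1} (pv_near ?g w) + integral {2..M} (pv_far ?g w))
      + integral {w * M..} ?f) (({0..w - e} \<union> {w + e..w * M}) \<union> {w * M..})"
  proof (rule has_integral_Un)
    show "(?f has_integral integral {d..1} (pv_near ?g w) + integral {2..M} (pv_far ?g w))
        ({0..w - e} \<union> {w + e..w * M})"
      using has_integral_cauchy_kernel_bounded[OF g w d(1,2) M] unfolding d(3) .
    show "(?f has_integral integral {w * M..} ?f) {w * M..}"
      using cauchy_kernel_tail(1)[OF g B(2,1) w wM] by (rule integrable_integral)
    have "({0..w - e} \<union> {w + e..w * M}) \<inter> {w * M..} \<subseteq> {w * M}"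
      unfolding subset_iff Int_iff Un_iff atLeastAtMost_iff atLeast_iff singleton_iff
      using w e wM by (smt (verit))
    then show "negligible (({0..w - e} \<union> {w + e..w * M}) \<inter> {w * M..})"
      by (rule negligible_subset[rotated]) simp
  qed
  moreover have "({0..w - e} \<union> {w + e..w * M}) \<union> {w * M..} = {0..w - e} \<union> {w + e..}"
    unfolding set_eq_iff atLeastAtMost_iff atLeast_iff Un_iff using w e wM by (intro allI) (smt (verit))
  moreover have "integral ({0<..<w - e} \<union> {w + e<..}) ?f = integral ({0..w - e} \<union> {w + e..}) ?f"
    by (rule integral_spike_set) (auto intro: negligible_subset[of "{0, w - e, w + e}"])
  ultimately have "integral ({0<..<w - e} \<union> {w + e<..}) ?f
      = integral {d..1} (pv_near ?g w) + integral {2..M} (pv_far ?g w) + integral {w * M..} ?f"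
    by (simp add: integral_unique)
  moreover have "pv_rescaled ?g w = integral {0..d} (pv_near ?g w) + integral {d..1} (pv_near ?g w)
      + integral {2..M} (pv_far ?g w) + integral {M..} (pv_far ?g w)"
    using integral_pv_near_split[OF c w, of d] integral_pv_far_split[OF g B(2,1) w M] d
    by (simp add: pv_rescaled_def)
  ultimately show ?thesis by (simp add: d_def)
qed

lemma pv_cutoff_integral_error_le:
  assumes c: "decaying_ratfun p q" and w: "w > 0" and e: "e > 0" "e < w" and M: "M \<ge> 2"
    and B: "B \<ge> 0" "\<And>y. y > 0 \<Longrightarrow> norm (ratfun p q y) \<le> B / y ^ 2"
      "\<And>y. y \<ge> 0 \<Longrightarrow> norm (ratfun (quotient_deriv_num p q) (q * q) y) \<le> B"
  shows "norm (integral ({0<..<w - e} \<union> {w + e<..}) (\<lambda>x. ratfun p q x / of_real (x - w))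
      - pv_rescaled (ratfun p q) w) \<le> 2 * B * e + 2 * (B / w ^ 2) / M"
proof -
  note g = continuous_on_decaying_ratfun[OF c]
  define a where "a = integral {0..e / w} (pv_near (ratfun p q) w)"
  define b where "b = integral {M..} (pv_far (ratfun p q) w)"
  define t where "t = integral {w * M..} (\<lambda>x. ratfun p q x / of_real (x - w))"
  have "norm a \<le> (2 * w * B) * (e / w)"
    unfolding a_def by (rule norm_integral_pv_near_le[OF c w])
       (use B w e norm_pv_near_decaying_ratfun_le[OF c w _ B(3)] in auto)
  also have "\<dots> = 2 * B * e" using w by simp
  finally have near: "norm a \<le> 2 * B * e" .
  have wM: "w * M \<ge> 2 * w" using w M by simp
  have "norm b \<le> (2 * B / w ^ 2) * M powr -2 / 2"
    unfolding b_def by (rule pv_far_tail(2)[OF g B(2,1) w M])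
  also have "\<dots> = (B / w ^ 2) / M ^ 2" using M by (simp add: powr_neg_numeral)
  finally have far: "norm b \<le> (B / w ^ 2) / M ^ 2" .
  have "norm t \<le> (2 * B) * (w * M) powr -2 / 2"
    unfolding t_def by (rule cauchy_kernel_tail(2)[OF g B(2,1) w wM])
  also have "\<dots> = (B / w ^ 2) / M ^ 2" using M w by (simp add: powr_neg_numeral power_mult_distrib)
  finally have tail: "norm t \<le> (B / w ^ 2) / M ^ 2" .
  have M2: "(B / w ^ 2) / M ^ 2 \<le> (B / w ^ 2) / M"
    using M B(1) by (intro divide_left_mono) (auto simp: power2_eq_square)
  have "norm (integral ({0<..<w - e} \<union> {w + e<..}) (\<lambda>x. ratfun p q x / of_real (x - w))
      - pv_rescaled (ratfun p q) w) = norm (t - (a + b))"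
    unfolding pv_cutoff_integral_eq[OF c w e M] a_def[symmetric] b_def[symmetric] t_def[symmetric]
    by (simp add: algebra_simps)
  also have "\<dots> \<le> norm t + (norm a + norm b)"
    using norm_triangle_ineq4[of t "a + b"] norm_triangle_ineq[of a b] by linarith
  also have "\<dots> \<le> 2 * B * e + 2 * ((B / w ^ 2) / M)"
    using near far tail M2 by linarith
  finally show ?thesis by simp
qed

lemma pv_cutoff_integral_approx:
  assumes c: "decaying_ratfun p q" and w: "w > 0" and e: "e > 0" "e < w"
    and B: "B \<ge> 0" "\<And>y. y > 0 \<Longrightarrow> norm (ratfun p q y) \<le> B / y ^ 2"
      "\<And>y. y \<ge> 0 \<Longrightarrow> norm (ratfun (quotient_deriv_num p q) (q * q) y) \<le> B"
  shows "norm (integral ({0<..<w - e} \<union> {w + e<..}) (\<lambda>x. ratfun p q x / of_real (x - w))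
      - pv_rescaled (ratfun p q) w) \<le> 2 * B * e"
proof -
  let ?D = "norm (integral ({0<..<w - e} \<union> {w + e<..}) (\<lambda>x. ratfun p q x / of_real (x - w))
      - pv_rescaled (ratfun p q) w)"
  have "((\<lambda>M. 2 * B * e + 2 * (B / w ^ 2) / M) \<longlongrightarrow> 2 * B * e + 0) at_top"
    by (intro tendsto_add tendsto_const tendsto_divide_0[OF tendsto_const]
        filterlim_at_top_imp_at_infinity filterlim_ident)
  moreover have "eventually (\<lambda>M. ?D \<le> 2 * B * e + 2 * (B / w ^ 2) / M) at_top"
    using eventually_ge_at_top[of 2]
    by eventually_elim (rule pv_cutoff_integral_error_le[OF c w e _ B])
  ultimately have "?D \<le> 2 * B * e + 0"
    by (rule tendsto_lowerbound) simp
  then show ?thesis by simp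
qed

lemma pv_integral_eq_pv_rescaled:
  assumes c: "decaying_ratfun p q" and w: "w > 0"
  shows "pv_integral (ratfun p q) w = pv_rescaled (ratfun p q) w"
proof -
  obtain B where B: "B \<ge> 0" "\<And>y. y > 0 \<Longrightarrow> norm (ratfun p q y) \<le> B / y ^ 2"
      "\<And>y. y \<ge> 0 \<Longrightarrow> norm (ratfun (quotient_deriv_num p q) (q * q) y) \<le> B"
    using decaying_ratfun_bounds[OF c] by metis
  let ?I = "\<lambda>e. integral ({0<..<w - e} \<union> {w + e<..}) (\<lambda>x. ratfun p q x / of_real (x - w))"
  have "eventually (\<lambda>e. norm (?I e - pv_rescaled (ratfun p q) w) \<le> 2 * B * e) (at_right 0)"
    unfolding eventually_at_right_field
    by (rule exI[of _ w]) (use w pv_cutoff_integral_approx[OF c w _ _ B] in auto)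
  moreover have "((\<lambda>e. 2 * B * e) \<longlongrightarrow> 0) (at_right 0)"
    by (rule tendsto_eq_intros | simp)+
  ultimately have "((\<lambda>e. ?I e - pv_rescaled (ratfun p q) w) \<longlongrightarrow> 0) (at_right 0)"
    by (rule Lim_null_comparison)
  then have "(?I \<longlongrightarrow> pv_rescaled (ratfun p q) w) (at_right 0)"
    by (simp add: LIM_zero_iff)
  then show ?thesis unfolding pv_integral_def by (intro tendsto_Lim) auto
qed

lemma pv_integral_cong:
  assumes "\<And>x. x > 0 \<Longrightarrow> f x = g x" "w > 0"
  shows "pv_integral f w = pv_integral g w"
proof -
  have "eventually (\<lambda>e. integral ({0<..<w - e} \<union> {w + e<..}) (\<lambda>x. f x / complex_of_real (x - w)) =
        integral ({0<..<w - e} \<union> {w + e<..}) (\<lambda>x. g x / complex_of_real (x - w))) (at_right 0)"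
    unfolding eventually_at_right_field
    by (rule exI[of _ 1]) (use assms in \<open>auto intro!: integral_cong\<close>)
  then show ?thesis unfolding pv_integral_def by (rule Lim_cong) simp
qed

lemma symbol_pv_integral:
  assumes c: "decaying_ratfun p q" and h: "\<And>x. x > 0 \<Longrightarrow> h x = ratfun p q x"
  shows "symbol j 0 (pv_integral h)"
  by (rule symbol_cong[OF symbol_pv_rescaled[OF c]])
     (use pv_integral_eq_pv_rescaled[OF c] pv_integral_cong[OF h] in auto)

section \<open>Matrix-valued symbols and the resolvent\<close>

lemma norm_vec_le_sum: "norm (x :: 'a::real_normed_vector ^ 'n) \<le> (\<Sum>i\<in>UNIV. norm (x $ i))"
  unfolding norm_vec_def by (rule L2_set_le_sum) simp

lemma norm_matrix_entry_le: "norm ((A :: 'a::real_normed_vector ^'n ^'m) $ i $ j) \<le> norm A"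
  using Finite_Cartesian_Product.norm_nth_le[of "A $ i" j]
    Finite_Cartesian_Product.norm_nth_le[of A i] by linarith

lemma norm_matrix_mult_le:
  fixes A :: "complex ^'n ^'m" and B :: "complex ^'k ^'n"
  shows "norm (A ** B) \<le> norm A * norm B * (real CARD('m) * real CARD('k) * real CARD('n))"
proof -
  have entry: "norm ((A ** B) $ i $ j) \<le> real CARD('n) * (norm A * norm B)" for i j
  proof -
    have "norm ((A ** B) $ i $ j) \<le> (\<Sum>k\<in>(UNIV::'n set). norm (A $ i $ k * B $ k $ j))"
      unfolding matrix_matrix_mult_def by (simp add: norm_sum)
    also have "\<dots> \<le> (\<Sum>k\<in>(UNIV::'n set). norm A * norm B)"
      by (rule sum_mono) (simp add: norm_mult mult_mono norm_matrix_entry_le)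
    finally show ?thesis by simp
  qed
  have "norm (A ** B) \<le> (\<Sum>i\<in>(UNIV::'m set). \<Sum>j\<in>(UNIV::'k set). norm ((A ** B) $ i $ j))"
    using norm_vec_le_sum[of "A ** B"] sum_mono[OF norm_vec_le_sum] by (rule order_trans)
  also have "\<dots> \<le> (\<Sum>i\<in>(UNIV::'m set). \<Sum>j\<in>(UNIV::'k set). real CARD('n) * (norm A * norm B))"
    by (intro sum_mono entry)
  also have "\<dots> = norm A * norm B * (real CARD('m) * real CARD('k) * real CARD('n))"
    by (simp add: algebra_simps)
  finally show ?thesis .
qed

lemma bounded_bilinear_matrix_mult:
  "bounded_bilinear (\<lambda>(A :: complex ^'n ^'m) (B :: complex ^'k ^'n). A ** B)"
proof (rule bounded_bilinear.intro)
  fix a a' :: "complex ^'n ^'m" and b b' :: "complex ^'k ^'n" and r :: real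
  show "(a + a') ** b = a ** b + a' ** b"
    by (simp add: matrix_matrix_mult_def vec_eq_iff distrib_right sum.distrib)
  show "a ** (b + b') = a ** b + a ** b'" by (rule matrix_add_ldistrib)
  show "(r *\<^sub>R a) ** b = r *\<^sub>R (a ** b)" by (rule scalar_matrix_assoc[symmetric])
  show "a ** (r *\<^sub>R b) = r *\<^sub>R (a ** b)"
    by (simp add: matrix_matrix_mult_def vec_eq_iff scaleR_sum_right)
next
  show "\<exists>K. \<forall>(a :: complex ^'n ^'m) (b :: complex ^'k ^'n). norm (a ** b) \<le> norm a * norm b * K"
    using norm_matrix_mult_le by blast
qed

definition single_entry :: "'n \<Rightarrow> 'n \<Rightarrow> complex \<Rightarrow> complex ^'n ^'n" where
  "single_entry a b c = (\<chi> i k. if i = a \<and> k = b then c else 0)"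

lemma bounded_linear_single_entry: "bounded_linear (single_entry a b)"
proof (rule bounded_linear_intro[where K=1])
  fix x y :: complex and r :: real
  show "single_entry a b (x + y) = single_entry a b x + single_entry a b y"
    by (simp add: single_entry_def vec_eq_iff)
  show "single_entry a b (r *\<^sub>R x) = r *\<^sub>R single_entry a b x"
    by (simp add: single_entry_def vec_eq_iff)
  have "norm (single_entry a b x) \<le> (\<Sum>i\<in>UNIV. \<Sum>k\<in>UNIV. norm (single_entry a b x $ i $ k))"
    using norm_vec_le_sum[of "single_entry a b x"] sum_mono[OF norm_vec_le_sum] by (rule order_trans)
  also have "\<dots> = (\<Sum>i\<in>UNIV. \<Sum>k\<in>UNIV. if i = a \<and> k = b then norm x else 0)"
    by (intro sum.cong) (auto simp: single_entry_def)
  also have "\<dots> = norm x"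
  proof -
    have "(\<Sum>k\<in>UNIV. if i = a \<and> k = b then norm x else 0) = (if i = a then norm x else 0)" for i
      by (cases "i = a") (simp_all add: sum.delta)
    then show ?thesis by (simp add: sum.delta)
  qed
  finally show "norm (single_entry a b x) \<le> norm x * 1" by simp
qed

lemma matrix_eq_sum_single_entry: "(\<chi> i k. F i k) = (\<Sum>a\<in>UNIV. \<Sum>b\<in>UNIV. single_entry a b (F a b))"
proof -
  have "(\<Sum>b\<in>UNIV. if i = a \<and> k = b then F a b else 0) = (if i = a then F a k else 0)" for i k a
    by (cases "i = a") (simp_all add: sum.delta)
  then show ?thesis by (simp add: vec_eq_iff single_entry_def sum.delta)
qed

lemma symbol_matrix:
  fixes F :: "'n::finite \<Rightarrow> 'n \<Rightarrow> real \<Rightarrow> complex"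
  assumes "\<And>a b. symbol j m (F a b)"
  shows "symbol j m (\<lambda>w. \<chi> i k. F i k w)"
proof -
  have "symbol j m (\<lambda>w. \<Sum>a\<in>UNIV. \<Sum>b\<in>UNIV. single_entry a b (F a b w))"
    by (intro symbol_sum symbol_linear[OF assms bounded_linear_single_entry]) simp_all
  then show ?thesis by (simp add: matrix_eq_sum_single_entry[symmetric])
qed

lemma matrix_inv_det_nonzero:
  fixes M :: "complex ^'n ^'n"
  assumes "det M \<noteq> 0"
  shows "M ** matrix_inv M = mat 1" "matrix_inv M ** M = mat 1"
proof -
  have "\<exists>M'. M ** M' = mat 1 \<and> M' ** M = mat 1"
    using assms invertible_det_nz unfolding invertible_def by blast
  then have "M ** matrix_inv M = mat 1 \<and> matrix_inv M ** M = mat 1"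
    unfolding matrix_inv_def by (rule someI_ex)
  then show "M ** matrix_inv M = mat 1" "matrix_inv M ** M = mat 1" by auto
qed

lemma matrix_inverse_diff:
  fixes A B R S :: "complex ^'n ^'n"
  assumes "A ** R = mat 1" "S ** B = mat 1"
  shows "S - R = - (S ** (B - A) ** R)"
proof -
  have "S ** (B - A) ** R = S ** B ** R - S ** A ** R"
    by (simp add: bounded_bilinear.diff_right[OF bounded_bilinear_matrix_mult]
        bounded_bilinear.diff_left[OF bounded_bilinear_matrix_mult])
  also have "\<dots> = R - S"
    using assms by (simp add: matrix_mul_assoc[symmetric] matrix_mul_lid matrix_mul_rid)
  finally show ?thesis by simp
qed

lemma norm_matrix_inverse_diff_le:
  fixes A B R S :: "complex ^'n ^'n"
  assumes inv: "A ** R = mat 1" "S ** B = mat 1"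
    and K: "\<And>(X :: complex ^'n ^'n) (Y :: complex ^'n ^'n). norm (X ** Y) \<le> norm X * norm Y * K" "K > 0"
    and small: "norm (B - A) * (K * K * norm R) \<le> 1 / 2"
  shows "norm (S - R) \<le> 2 * K * K * norm R * norm R * norm (B - A)"
proof -
  have "norm (S - R) = norm (S ** (B - A) ** R)"
    unfolding matrix_inverse_diff[OF inv] by simp
  also have "\<dots> \<le> norm (S ** (B - A)) * norm R * K" by (rule K(1))
  also have "\<dots> \<le> (norm S * norm (B - A) * K) * norm R * K"
    using K by (intro mult_right_mono) auto
  finally have diff: "norm (S - R) \<le> norm S * (norm (B - A) * (K * K * norm R))"
    by (simp add: algebra_simps)
  also have "\<dots> \<le> norm S * (1 / 2)" by (intro mult_left_mono small) simp
  finally have "norm S \<le> 2 * norm R"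
    using norm_triangle_sub[of S R] by simp
  with diff have "norm (S - R) \<le> (2 * norm R) * (norm (B - A) * (K * K * norm R))"
    by (smt (verit, best) mult_right_mono mult_nonneg_nonneg norm_ge_zero K(2))
  then show ?thesis by (simp add: algebra_simps)
qed

lemma matrix_inverse_continuous:
  fixes A R :: "real \<Rightarrow> complex ^'n ^'n"
  assumes inv: "\<And>y. y > 0 \<Longrightarrow> A y ** R y = mat 1 \<and> R y ** A y = mat 1"
    and x: "x > 0" and A: "(A \<longlongrightarrow> A x) (at x)"
  shows "(R \<longlongrightarrow> R x) (at x)"
proof -
  obtain K where K: "\<And>(X :: complex ^'n ^'n) (Y :: complex ^'n ^'n). norm (X ** Y) \<le> norm X * norm Y * K" "K > 0"
    using bounded_bilinear.pos_bounded[OF bounded_bilinear_matrix_mult] by blast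
  define c where "c = K * K * norm (R x) + 1"
  have c: "c > 0" unfolding c_def using K(2) by (simp add: add_nonneg_pos)
  have "eventually (\<lambda>y. dist (A y) (A x) < 1 / (2 * c)) (at x)"
    using tendstoD[OF A] c by simp
  moreover have "eventually (\<lambda>y. y > 0) (at x)"
    using order_tendstoD(1)[OF tendsto_ident_at x] .
  ultimately have "eventually (\<lambda>y. norm (R y - R x)
      \<le> (2 * K * K * norm (R x) * norm (R x)) * norm (A y - A x)) (at x)"
  proof eventually_elim
    case (elim y)
    have "norm (A y - A x) * c \<le> 1 / 2"
      using elim(1) c by (simp add: dist_norm less_divide_eq)
    moreover have "norm (A y - A x) * (K * K * norm (R x)) \<le> norm (A y - A x) * c"
      by (intro mult_left_mono) (auto simp: c_def)
    ultimately show ?case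
      using norm_matrix_inverse_diff_le[of "A x" "R x" "R y" "A y", OF _ _ K] inv x elim(2) by auto
  qed
  moreover have "((\<lambda>y. (2 * K * K * norm (R x) * norm (R x)) * norm (A y - A x)) \<longlongrightarrow> 0) (at x)"
    using A by (intro tendsto_mult_right_zero) (simp add: tendsto_norm_zero_iff LIM_zero_iff)
  ultimately have "((\<lambda>y. R y - R x) \<longlongrightarrow> 0) (at x)"
    by (rule Lim_null_comparison)
  then show ?thesis by (simp add: LIM_zero_iff)
qed

lemma has_vector_derivative_iff_diff_quotient:
  fixes f :: "real \<Rightarrow> 'a::real_normed_vector"
  shows "(f has_vector_derivative D) (at x) \<longleftrightarrow> ((\<lambda>y. (f y - f x) /\<^sub>R (y - x)) \<longlongrightarrow> D) (at x)"
proof -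
  have "eventually (\<lambda>h. norm (f (x + h) - f x - h *\<^sub>R D) / norm h
      = norm ((f (x + h) - f x) /\<^sub>R h - D)) (at 0)"
  proof (rule eventually_mono[OF eventually_neq_at_within[of 0]])
    fix h :: real assume h: "h \<noteq> 0"
    have "(f (x + h) - f x) /\<^sub>R h - D = (1 / h) *\<^sub>R (f (x + h) - f x - h *\<^sub>R D)"
      using h by (simp add: scaleR_diff_right divide_inverse)
    then show "norm (f (x + h) - f x - h *\<^sub>R D) / norm h = norm ((f (x + h) - f x) /\<^sub>R h - D)"
      using h by (simp add: divide_inverse mult.commute)
  qed
  then have "((\<lambda>h. norm (f (x + h) - f x - h *\<^sub>R D) / norm h) \<longlongrightarrow> 0) (at 0)
      \<longleftrightarrow> ((\<lambda>h. norm ((f (x + h) - f x) /\<^sub>R h - D)) \<longlongrightarrow> 0) (at 0)"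
    by (rule tendsto_cong)
  then show ?thesis
    unfolding has_vector_derivative_def has_derivative_at
    by (simp add: bounded_linear_scaleR_left tendsto_norm_zero_iff LIM_zero_iff LIM_offset_zero_iff)
qed

lemma matrix_inverse_has_vector_derivative:
  fixes A R :: "real \<Rightarrow> complex ^'n ^'n"
  assumes inv: "\<And>y. y > 0 \<Longrightarrow> A y ** R y = mat 1 \<and> R y ** A y = mat 1"
    and x: "x > 0" and A: "(A has_vector_derivative A') (at x)"
  shows "(R has_vector_derivative - (R x ** A' ** R x)) (at x)"
proof -
  interpret matrix_mult: bounded_bilinear "\<lambda>(a :: complex ^'n ^'n) (b :: complex ^'n ^'n). a ** b"
    by (rule bounded_bilinear_matrix_mult)
  have "(R \<longlongrightarrow> R x) (at x)"
    using matrix_inverse_continuous[OF inv x] has_vector_derivative_continuous[OF A]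
    by (simp add: continuous_at)
  moreover have "((\<lambda>y. (A y - A x) /\<^sub>R (y - x)) \<longlongrightarrow> A') (at x)"
    using A has_vector_derivative_iff_diff_quotient by blast
  ultimately have "((\<lambda>y. - (R y ** ((A y - A x) /\<^sub>R (y - x)) ** R x)) \<longlongrightarrow> - (R x ** A' ** R x)) (at x)"
    by (intro tendsto_minus matrix_mult.tendsto tendsto_const)
  moreover have "eventually (\<lambda>y. - (R y ** ((A y - A x) /\<^sub>R (y - x)) ** R x) = (R y - R x) /\<^sub>R (y - x))
      (at x)"
    using x by (intro eventually_mono[OF eventually_at_in_open'[of "{0<..}"]])
      (auto simp: matrix_inverse_diff[of "A x" "R x" "R y" "A y" for y] inv
        matrix_mult.scaleR_left matrix_mult.scaleR_right)
  ultimately show ?thesis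
    unfolding has_vector_derivative_iff_diff_quotient by (rule Lim_transform_eventually)
qed

lemma mat_of_real: "mat (complex_of_real x) = x *\<^sub>R (mat 1 :: complex ^'n ^'n)"
  by (simp add: vec_eq_iff mat_def) (simp add: scaleR_conv_of_real)

lemma inverse_shift_powr_bounded:
  fixes K R :: "real \<Rightarrow> complex ^'n ^'n"
  assumes K: "powr_bounded 0 K"
    and inv: "\<And>x. x > 0 \<Longrightarrow> R x ** (K x - mat (complex_of_real x)) = mat 1"
  shows "powr_bounded (-1) R"
proof -
  obtain c where c: "\<And>(X :: complex ^'n ^'n) (Y :: complex ^'n ^'n). norm (X ** Y) \<le> norm X * norm Y * c"
    "c > 0"
    using bounded_bilinear.pos_bounded[OF bounded_bilinear_matrix_mult] by blast
  obtain C W where CW: "C \<ge> 0" "W \<ge> 1" "\<And>x. x \<ge> W \<Longrightarrow> norm (K x) \<le> C * x powr 0"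
    using powr_boundedE[OF K] by metis
  let ?I = "norm (mat 1 :: complex ^'n ^'n)"
  show ?thesis
  proof (rule powr_boundedI[of "max W (2 * c * C + 1)" _ "2 * ?I"])
    fix x assume x: "x \<ge> max W (2 * c * C + 1)"
    then have x1: "x \<ge> 1" "norm (K x) \<le> C" "c * C \<le> x / 2" using CW by auto
    have eq: "x *\<^sub>R R x = R x ** K x - mat 1"
      using inv[of x] x1 by (simp add: bounded_bilinear.diff_right[OF bounded_bilinear_matrix_mult]
          mat_of_real matrix_scalar_ac matrix_mul_rid algebra_simps)
    have "x * norm (R x) = norm (R x ** K x - mat 1)"
      using x1 arg_cong[OF eq, of norm] by simp
    then have n1: "x * norm (R x) \<le> norm (R x ** K x) + ?I"
      using norm_triangle_ineq4[of "R x ** K x" "mat 1"] by linarith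
    have "norm (R x ** K x) \<le> norm (R x) * norm (K x) * c" by (rule c(1))
    also have "\<dots> \<le> norm (R x) * C * c"
      using mult_right_mono[OF mult_left_mono[OF x1(2) norm_ge_zero] less_imp_le[OF c(2)]] .
    also have "\<dots> \<le> norm (R x) * (x / 2)"
      using mult_left_mono[OF x1(3) norm_ge_zero[of "R x"]] by (simp add: mult.commute mult.left_commute)
    finally have "x * norm (R x) \<le> norm (R x) * (x / 2) + ?I" using n1 by linarith
    moreover have "norm (R x) * (x / 2) = (x * norm (R x)) / 2" by simp
    ultimately have "x * norm (R x) \<le> 2 * ?I" by linarith
    then have "norm (R x) \<le> 2 * ?I / x" using x1 by (simp add: pos_le_divide_eq mult.commute)
    then show "norm (R x) \<le> 2 * ?I * x powr -1" using x1 by (simp add: powr_neg_one)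
  qed
qed

lemma symbol_inverse_shift:
  fixes K R :: "real \<Rightarrow> complex ^'n ^'n"
  assumes K: "\<And>j. symbol j 0 K"
    and inv: "\<And>x. x > 0 \<Longrightarrow> (K x - mat (complex_of_real x)) ** R x = mat 1
      \<and> R x ** (K x - mat (complex_of_real x)) = mat 1"
  shows "symbol j (-1) R"
proof -
  define A where "A = (\<lambda>x. K x - mat (complex_of_real x))"
  let ?A' = "\<lambda>x. vector_derivative A (at x)"
  have A: "symbol j 1 A" for j
  proof -
    have "symbol j 1 (\<lambda>x. K x + - (x *\<^sub>R (mat 1 :: complex ^'n ^'n)))"
      by (intro symbol_add symbol_mono[OF K] symbol_linear[OF symbol_ident]
          bounded_linear_minus bounded_linear_scaleR_left) simp
    then show ?thesis by (rule symbol_cong) (simp add: A_def mat_of_real)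
  qed
  have inv': "A x ** R x = mat 1 \<and> R x ** A x = mat 1" if "x > 0" for x
    using inv[OF that] by (simp add: A_def)
  have R: "powr_bounded (-1) R"
    by (rule inverse_shift_powr_bounded[where K=K]) (use K[of 0] inv in auto)
  show ?thesis
  proof (induction j)
    case 0 then show ?case using R by simp
  next
    case (Suc j)
    have "symbol j (-1 + 0 + -1) (\<lambda>x. - (R x ** ?A' x ** R x))"
      using A[of "Suc j"] Suc.IH
      by (intro symbol_linear[OF _ bounded_linear_minus[OF bounded_linear_ident]]
          symbol_bilinear[OF symbol_bilinear[OF Suc.IH] Suc.IH] bounded_bilinear_matrix_mult) simp_all
    moreover have "(R has_vector_derivative - (R x ** ?A' x ** R x)) (at x)" if "x > 0" for x
      by (rule matrix_inverse_has_vector_derivative[OF inv' that symbol_SucD[OF A that]])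
    ultimately show ?case using R by (intro symbol_SucI) simp_all
  qed
qed

lemma symbol_Kpm:
  fixes v :: "'n::finite \<Rightarrow> real \<Rightarrow> complex" and pol rho :: "'n \<Rightarrow> 'n \<Rightarrow> complex poly"
  assumes ff: "\<And>m n x. x > 0 \<Longrightarrow> cnj (v m x) * v n x = ratfun (pol m n) (rho m n) x"
    and decay: "\<And>m n. decaying_ratfun (pol m n) (rho m n)"
  shows "symbol j 0 (Kpm s om lam v)"
proof -
  let ?h = "\<lambda>m n x. cnj (v m x) * v n x"
  have h: "symbol j 0 (?h m n)" for m n
  proof (rule symbol_cong[OF symbol_ratfun])
    show "poly (rho m n) (of_real x) \<noteq> 0" if "x > 0" for x
      using decay[of m n] that by (simp add: decaying_ratfun_def)
    show "pol m n = 0 \<or> real (degree (pol m n)) \<le> real (degree (rho m n)) + 0"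
      using decay[of m n] by (simp add: decaying_ratfun_def)
  qed (use ff in simp)
  have "symbol j 0 (\<lambda>w. \<chi> m n. (if m = n then complex_of_real (om m) else 0)
      + (- complex_of_real (lam\<^sup>2)) * pv_integral (?h m n) w
      + (- (complex_of_real s * \<i> * complex_of_real (pi * lam\<^sup>2))) * ?h m n w)"
    using symbol_pv_integral[OF decay ff] h
    by (intro symbol_matrix symbol_add symbol_const symbol_linear[OF _ bounded_linear_mult_right])
  then show ?thesis
    by (rule symbol_cong) (simp add: Kpm_def Dmat_def Gam_def vec_eq_iff)
qed

theorem lemma2:
  fixes om :: "'n::{finite,linorder} \<Rightarrow> real"
    and lam :: real
    and v :: "'n \<Rightarrow> real \<Rightarrow> complex"
    and pol rho :: "'n \<Rightarrow> 'n \<Rightarrow> complex poly"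
    and s :: real
    and r :: nat
  assumes om_mono: "mono om"
    and v_L2: "\<And>n. (\<lambda>x. (cmod (v n x))^2) integrable_on {0<..}"
    and ff: "\<And>m n x. x > 0 \<Longrightarrow>
               cnj (v m x) * v n x = poly (pol m n) (complex_of_real x) / poly (rho m n) (complex_of_real x)"
    and deg: "\<And>m n. degree (rho m n) \<ge> degree (pol m n) + 2"
    and rho_nz: "\<And>m n x. x \<ge> 0 \<Longrightarrow> poly (rho m n) (complex_of_real x) \<noteq> 0"
    and pol0: "\<And>m n. poly (pol m n) 0 = 0"
    and s: "s = 1 \<or> s = -1"
    and det_nz: "\<And>w. w > 0 \<Longrightarrow> det (Kpm s om lam v w - mat (complex_of_real w)) \<noteq> 0"
  shows "(\<forall>k<r. \<forall>x>0. (nth_vderiv k (Rpm s om lam v) has_vector_derivative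
                         nth_vderiv (Suc k) (Rpm s om lam v) x) (at x))
       \<and> (\<exists>C W. \<forall>x\<ge>W. norm (nth_vderiv r (Rpm s om lam v) x) \<le> C * x powr (- real r - 1))"
proof -
  have "symbol j 0 (Kpm s om lam v)" for j
    using ff deg rho_nz by (intro symbol_Kpm) (auto simp: ratfun_def decaying_ratfun_def)
  moreover have "(Kpm s om lam v x - mat (complex_of_real x)) ** Rpm s om lam v x = mat 1
      \<and> Rpm s om lam v x ** (Kpm s om lam v x - mat (complex_of_real x)) = mat 1" if "x > 0" for x
    using matrix_inv_det_nonzero[OF det_nz[OF that]] by (simp add: Rpm_def)
  ultimately have R: "symbol r (-1) (Rpm s om lam v)"
    by (rule symbol_inverse_shift)
  have "- 1 - real r = - real r - 1" by simp
  with symbol_nth_vderiv_powr_bounded[OF R]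
  have "powr_bounded (- real r - 1) (nth_vderiv r (Rpm s om lam v))" by simp
  then show ?thesis
    using symbol_nth_vderiv_has_vector_derivative[OF R] unfolding powr_bounded_def by blast
qed

end
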